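(* Let $\Psi$ be the multiset union of $\check\Phi_H^+$ and the multiset $V$ of weights of $V_{\check\rho}$, and define $\mathscr P_\Psi(\check\mu;t)\in\mathbb Z[t]$ by $$\sum_{\check\mu\in\Lambda_H}\mathscr P_\Psi(\check\mu;t)e^{\check\mu}=\prod_{\check\nu\in\Psi}\frac1{1-te^{-\check\nu}}.$$ For $\check\mu\in\Lambda_H$ put $$c_{\check\mu}(q)=\sum_{w\in W_H}(-1)^{\ell(w)}\mathscr P_\Psi(\check\rho_B-w\check\rho_B-\check\mu;q^{-1})\,q^{\langle\det,\check\mu\rangle}.$$ Then, as formal power series, $$\sum_{\check\mu\in\Lambda_H,\ \langle\det,\check\mu\rangle\ge0}c_{\check\mu}(q)e^{\check\mu}=L(\check\rho)\cdot\prod_{\check\gamma\in\check\Phi_H^+}\frac{1-e^{\check\gamma}}{1-q^{-1}e^{\check\gamma}},$$ where $L(\check\rho)=\prod_{\check\nu\in V}(1-e^{\check\nu})^{-1}$.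
   Context: $H$ is a split connected reductive group with coweight lattice $\Lambda_H$, positive coroots $\check\Phi_H^+$, Weyl group $W_H$ with length function $\ell$, and $\check\rho_B=\frac12\sum_{\check\gamma\in\check\Phi_H^+}\check\gamma$. $\check\rho$ is an antidominant coweight not in the linear span of the coroots, and $V_{\check\rho}$ is the irreducible representation of the dual group $\check H$ with lowest weight $\check\rho$; $V$ is the multiset of its weights. It is assumed that the character group of $H$ is generated by a character $\det$ with $\langle\det,\check\rho\rangle=1$; then $\langle\det,\check\nu\rangle=1$ for all $\check\nu\in V$ and $\langle\det,\check\gamma\rangle=0$ for all coroots $\check\gamma$. $q>1$ is a fixed number (the residue field cardinality). All series are formal series in $e^{\check\mu}$, $\check\mu\in\Lambda_H$, supported in the cone generated by $\check\Phi_H^+$ and $V$. *)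

theory Defs
  imports Main "HOL-Library.Multiset" "HOL-Library.FuncSet" "HOL-Computational_Algebra.Polynomial"
begin

text \<open>Lattices: the coweight lattice Lambda_H and the character lattice X^*(T) are both
  modelled as 'n => int for a finite index type 'n (dual bases), with the perfect pairing below.\<close>

definition pair :: "('n::finite \<Rightarrow> int) \<Rightarrow> ('n \<Rightarrow> int) \<Rightarrow> int" where
  "pair x lam = (\<Sum>i\<in>UNIV. x i * lam i)"

definition rrefl :: "(('n::finite \<Rightarrow> int) \<Rightarrow> ('n \<Rightarrow> int)) \<Rightarrow> ('n \<Rightarrow> int) \<Rightarrow> ('n \<Rightarrow> int) \<Rightarrow> ('n \<Rightarrow> int)" where
  "rrefl cor a x = (\<lambda>i. x i - pair x (cor a) * a i)"

definition corefl :: "(('n::finite \<Rightarrow> int) \<Rightarrow> ('n \<Rightarrow> int)) \<Rightarrow> ('n \<Rightarrow> int) \<Rightarrow> ('n \<Rightarrow> int) \<Rightarrow> ('n \<Rightarrow> int)" where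
  "corefl cor a lam = (\<lambda>i. lam i - pair a lam * cor a i)"

text \<open>Reduced root datum (X, R, Lambda, cor ` R): this is exactly the data of a split connected
  reductive group H (with a split maximal torus).\<close>
definition root_datum :: "('n::finite \<Rightarrow> int) set \<Rightarrow> (('n \<Rightarrow> int) \<Rightarrow> ('n \<Rightarrow> int)) \<Rightarrow> bool" where
  "root_datum R cor \<longleftrightarrow> finite R \<and> inj_on cor R
     \<and> (\<forall>a\<in>R. pair a (cor a) = 2)
     \<and> (\<forall>a\<in>R. \<forall>b\<in>R. rrefl cor a b \<in> R)
     \<and> (\<forall>a\<in>R. \<forall>b\<in>R. corefl cor a (cor b) \<in> cor ` R)
     \<and> (\<forall>a\<in>R. (\<lambda>i. 2 * a i) \<notin> R)"

definition positive_system :: "('n::finite \<Rightarrow> int) set \<Rightarrow> ('n \<Rightarrow> int) set \<Rightarrow> bool" where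
  "positive_system R Rp \<longleftrightarrow> (\<exists>xi :: 'n \<Rightarrow> real.
      (\<forall>a\<in>R. (\<Sum>i\<in>UNIV. real_of_int (a i) * xi i) \<noteq> 0)
      \<and> Rp = {a\<in>R. (\<Sum>i\<in>UNIV. real_of_int (a i) * xi i) > 0})"

definition simple_roots :: "('n \<Rightarrow> int) set \<Rightarrow> ('n \<Rightarrow> int) set" where
  "simple_roots Rp = {a\<in>Rp. \<not> (\<exists>b\<in>Rp. \<exists>c\<in>Rp. a = (\<lambda>i. b i + c i))}"

inductive_set weyl_group :: "('n::finite \<Rightarrow> int) set \<Rightarrow> (('n \<Rightarrow> int) \<Rightarrow> ('n \<Rightarrow> int))
    \<Rightarrow> (('n \<Rightarrow> int) \<Rightarrow> ('n \<Rightarrow> int)) set" for R cor where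
  weyl_id: "id \<in> weyl_group R cor"
| weyl_step: "w \<in> weyl_group R cor \<Longrightarrow> a \<in> R \<Longrightarrow> corefl cor a \<circ> w \<in> weyl_group R cor"

definition wlength :: "('n::finite \<Rightarrow> int) set \<Rightarrow> (('n \<Rightarrow> int) \<Rightarrow> ('n \<Rightarrow> int))
    \<Rightarrow> (('n \<Rightarrow> int) \<Rightarrow> ('n \<Rightarrow> int)) \<Rightarrow> nat" where
  "wlength Rp cor w = (LEAST n. \<exists>as. set as \<subseteq> simple_roots Rp \<and> length as = n
      \<and> foldr (\<lambda>a f. corefl cor a \<circ> f) as id = w)"

text \<open>rho_B - w rho_B, where 2 rho_B is the sum of the positive coroots.\<close>
definition rhodiff :: "('n::finite \<Rightarrow> int) set \<Rightarrow> (('n \<Rightarrow> int) \<Rightarrow> ('n \<Rightarrow> int))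
    \<Rightarrow> (('n \<Rightarrow> int) \<Rightarrow> ('n \<Rightarrow> int)) \<Rightarrow> ('n \<Rightarrow> int)" where
  "rhodiff Rp cor w = (let tr = (\<lambda>i. \<Sum>g\<in>cor ` Rp. g i) in (\<lambda>i. (tr i - w tr i) div 2))"

text \<open>Coefficient (a polynomial in t) of e^mu in the formal series
  prod_{nu in M} 1/(1 - t e^nu), for a multiset M of lattice vectors.\<close>
definition geom_poly :: "('n::finite \<Rightarrow> int) multiset \<Rightarrow> ('n \<Rightarrow> int) \<Rightarrow> int poly" where
  "geom_poly M mu = (let I = {(v, j). j < count M v} in
     (\<Sum>c\<in>{c \<in> I \<rightarrow>\<^sub>E (UNIV :: nat set). (\<lambda>k. \<Sum>x\<in>I. int (c x) * fst x k) = mu}.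
        monom 1 (\<Sum>x\<in>I. c x)))"

text \<open>Weight multiplicities of the irreducible representation of the dual group with lowest
  weight rho (Weyl character formula / Kostant multiplicity formula, lowest weight form):
  char(V) * prod_{gamma>0}(1 - e^gamma) = sum_w (-1)^l(w) e^{w rho + rho_B - w rho_B}.\<close>
definition weight_mult :: "('n::finite \<Rightarrow> int) set \<Rightarrow> (('n \<Rightarrow> int) \<Rightarrow> ('n \<Rightarrow> int))
    \<Rightarrow> ('n \<Rightarrow> int) set \<Rightarrow> ('n \<Rightarrow> int) \<Rightarrow> ('n \<Rightarrow> int) \<Rightarrow> int" where
  "weight_mult R cor Rp rho mu = (\<Sum>w\<in>weyl_group R cor. (-1) ^ wlength Rp cor w *
      poly (geom_poly (mset_set (cor ` Rp)) (\<lambda>i. mu i - w rho i - rhodiff Rp cor w i)) 1)"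

definition weights_V :: "('n::finite \<Rightarrow> int) set \<Rightarrow> (('n \<Rightarrow> int) \<Rightarrow> ('n \<Rightarrow> int))
    \<Rightarrow> ('n \<Rightarrow> int) set \<Rightarrow> ('n \<Rightarrow> int) \<Rightarrow> ('n \<Rightarrow> int) multiset" where
  "weights_V R cor Rp rho = (\<Sum>mu\<in>{mu. weight_mult R cor Rp rho mu \<noteq> 0}.
      replicate_mset (nat (weight_mult R cor Rp rho mu)) mu)"

definition Psi :: "('n::finite \<Rightarrow> int) set \<Rightarrow> (('n \<Rightarrow> int) \<Rightarrow> ('n \<Rightarrow> int))
    \<Rightarrow> ('n \<Rightarrow> int) set \<Rightarrow> ('n \<Rightarrow> int) \<Rightarrow> ('n \<Rightarrow> int) multiset" where
  "Psi R cor Rp rho = mset_set (cor ` Rp) + weights_V R cor Rp rho"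

definition P_Psi :: "('n::finite \<Rightarrow> int) set \<Rightarrow> (('n \<Rightarrow> int) \<Rightarrow> ('n \<Rightarrow> int))
    \<Rightarrow> ('n \<Rightarrow> int) set \<Rightarrow> ('n \<Rightarrow> int) \<Rightarrow> ('n \<Rightarrow> int) \<Rightarrow> int poly" where
  "P_Psi R cor Rp rho mu = geom_poly (image_mset (\<lambda>v i. - v i) (Psi R cor Rp rho)) mu"

definition c_coeff :: "('n::finite \<Rightarrow> int) set \<Rightarrow> (('n \<Rightarrow> int) \<Rightarrow> ('n \<Rightarrow> int))
    \<Rightarrow> ('n \<Rightarrow> int) set \<Rightarrow> ('n \<Rightarrow> int) \<Rightarrow> ('n \<Rightarrow> int) \<Rightarrow> real \<Rightarrow> ('n \<Rightarrow> int) \<Rightarrow> real" where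
  "c_coeff R cor Rp rho det q mu = (\<Sum>w\<in>weyl_group R cor. (-1) ^ wlength Rp cor w *
      poly (map_poly of_int (P_Psi R cor Rp rho (\<lambda>i. rhodiff Rp cor w i - mu i))) (1 / q)
      * q powi pair det mu)"

text \<open>Product of formal series (functions Lambda => real; the supports lie in a pointed cone,
  so the defining sum is finite).\<close>
definition fconv :: "(('n::finite \<Rightarrow> int) \<Rightarrow> real) \<Rightarrow> (('n \<Rightarrow> int) \<Rightarrow> real) \<Rightarrow> ('n \<Rightarrow> int) \<Rightarrow> real" where
  "fconv f g mu = (\<Sum>a\<in>{a. f a \<noteq> 0 \<and> g (\<lambda>i. mu i - a i) \<noteq> 0}. f a * g (\<lambda>i. mu i - a i))"

text \<open>Coefficient of e^mu in L(rho) * prod_{gamma>0} (1 - e^gamma)/(1 - q^{-1} e^gamma).\<close>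
definition rhs_coeff :: "('n::finite \<Rightarrow> int) set \<Rightarrow> (('n \<Rightarrow> int) \<Rightarrow> ('n \<Rightarrow> int))
    \<Rightarrow> ('n \<Rightarrow> int) set \<Rightarrow> ('n \<Rightarrow> int) \<Rightarrow> real \<Rightarrow> ('n \<Rightarrow> int) \<Rightarrow> real" where
  "rhs_coeff R cor Rp rho q mu =
     fconv (\<lambda>m. real_of_int (poly (geom_poly (weights_V R cor Rp rho) m) 1))
       (fconv (\<lambda>m. \<Sum>S\<in>{S. S \<subseteq> cor ` Rp \<and> (\<lambda>i. \<Sum>g\<in>S. g i) = m}. (-1) ^ card S)
              (\<lambda>m. poly (map_poly of_int (geom_poly (mset_set (cor ` Rp)) m)) (1 / q))) mu"

end

theory Submission
  imports Defs "HOL-Library.Function_Algebras"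
begin

text \<open>
  Write \<open>D = \<Prod>(1 - e\<^sup>\<gamma>)\<close> and \<open>G\<^sub>t = \<Prod>(1 - t e\<^sup>\<gamma>)\<^sup>-\<^sup>1\<close>, products over the positive
  coroots \<open>\<gamma>\<close>, so that the right-hand side is \<open>L(\<rho>) D G\<^sub>t\<close> at \<open>t = q\<^sup>-\<^sup>1\<close>. The Weyl
  denominator formula \<open>D = \<Sum>\<^sub>w (-1)\<^bsup>l(w)\<^esup> e\<^bsup>\<rho>\<^sub>B - w \<rho>\<^sub>B\<^esup>\<close> turns it into
  \<open>\<Sum>\<^sub>w (-1)\<^bsup>l(w)\<^esup> e\<^bsup>\<rho>\<^sub>B - w \<rho>\<^sub>B\<^esup> L(\<rho>) G\<^sub>t\<close>. Since \<open>det\<close> vanishes on the coroots and is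
  \<open>1\<close> on every weight of \<open>V\<close>, a monomial \<open>e\<^sup>\<mu>\<close> of \<open>\<Prod>\<^sub>\<nu>\<^sub>\<in>\<^sub>\<Psi> (1 - t e\<^sup>\<nu>)\<^sup>-\<^sup>1\<close> uses exactly
  \<open>\<langle>det, \<mu>\<rangle>\<close> factors from \<open>V\<close>. Hence its coefficient is \<open>t\<^bsup>\<langle>det, \<mu>\<rangle>\<^esup>\<close> times the
  coefficient of \<open>e\<^sup>\<mu>\<close> in \<open>L(\<rho>) G\<^sub>t\<close>, and the latter vanishes when \<open>\<langle>det, \<mu>\<rangle> < 0\<close>; at
  \<open>t = q\<^sup>-\<^sup>1\<close> this is the identity, coefficient by coefficient.

  The denominator formula is proved classically, in the lattice scaled by 2: the coefficients
  of \<open>\<Prod>(e\<^sup>\<gamma> - e\<^sup>-\<^sup>\<gamma>)\<close> change sign under every simple reflection, so they are supported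
  on the regular Weyl group orbit of \<open>2\<rho>\<^sub>B\<close>, on which the Weyl group acts simply
  transitively; the exchange condition identifies the length with the number of inversions,
  which fixes the signs.
\<close>

section \<open>Lattice vectors\<close>

lemma sum_fun_apply: "(\<Sum>a\<in>A. f a) i = (\<Sum>a\<in>A. (f a i :: 'b::comm_monoid_add))"
  by (induction A rule: infinite_finite_induct) auto

definition smul :: "int \<Rightarrow> ('n \<Rightarrow> int) \<Rightarrow> ('n \<Rightarrow> int)" where
  "smul k v = (\<lambda>i. k * v i)"

lemma smul_apply [simp]: "smul k v i = k * v i"
  by (simp add: smul_def)

lemma smul_one [simp]: "smul 1 x = x"
  by (simp add: smul_def)

lemma smul_add_left: "smul (k + l) x = smul k x + smul l x"
  by (simp add: fun_eq_iff algebra_simps)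

lemma smul_zero_left [simp]: "smul 0 x = 0"
  by (simp add: fun_eq_iff)

lemma smul_zero_right [simp]: "smul k 0 = 0"
  by (simp add: fun_eq_iff)

lemma smul_two: "smul 2 x = x + x"
  by (simp add: fun_eq_iff)

lemma smul_two_eq_iff: "smul 2 x = smul 2 y \<longleftrightarrow> x = y"
  by (auto simp: fun_eq_iff)

lemma smul_cancel:
  assumes "v \<noteq> 0" and "smul k v = smul l v" shows "k = l"
proof -
  obtain i where "v i \<noteq> 0" "k * v i = l * v i" using assms by (auto simp: fun_eq_iff)
  thus ?thesis by simp
qed

lemma int_mult_le_four_eq_two:
  assumes "(k::int) \<ge> 2" "l \<ge> 2" "k * l \<le> 4" shows "k = 2" "l = 2"
proof -
  have "k * 2 \<le> k * l" "2 * l \<le> k * l" using assms by (simp_all add: mult_left_mono mult_right_mono)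
  thus "k = 2" "l = 2" using assms by linarith+
qed

interpretation pair_left: additive "\<lambda>x. pair x l"
  by standard (simp add: pair_def distrib_right sum.distrib)

interpretation pair_right: additive "pair l"
  by standard (simp add: pair_def distrib_left sum.distrib)

lemma pair_smul_left: "pair (smul k x) l = k * pair x l"
  unfolding pair_def by (simp add: sum_distrib_left mult.assoc)

lemma pair_smul_right: "pair l (smul k x) = k * pair l x"
  unfolding pair_def by (simp add: sum_distrib_left algebra_simps)

lemmas pair_simps = pair_left.add pair_left.diff pair_left.minus pair_left.sum pair_left.zero
  pair_right.add pair_right.diff pair_right.minus pair_right.sum pair_right.zero
  pair_smul_left pair_smul_right

definition real_pair :: "('n \<Rightarrow> real) \<Rightarrow> ('n::finite \<Rightarrow> int) \<Rightarrow> real" where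
  "real_pair xi a = (\<Sum>i\<in>UNIV. real_of_int (a i) * xi i)"

interpretation real_pair: additive "real_pair xi"
  by standard (simp add: real_pair_def distrib_right sum.distrib)

lemma real_pair_smul: "real_pair xi (smul k a) = k * real_pair xi a"
  unfolding real_pair_def by (simp add: sum_distrib_left mult.assoc)

section \<open>Reduced root data\<close>

lemma rrefl_eq: "rrefl cor a x = x - smul (pair x (cor a)) a"
  by (auto simp: rrefl_def)

lemma corefl_eq: "corefl cor a l = l - smul (pair a l) (cor a)"
  by (auto simp: corefl_def)

interpretation rrefl: additive "rrefl cor a"
  by standard (simp add: rrefl_eq fun_eq_iff pair_simps algebra_simps)

interpretation corefl: additive "corefl cor a"
  by standard (simp add: corefl_eq fun_eq_iff pair_simps algebra_simps)

lemma corefl_smul: "corefl cor a (smul k x) = smul k (corefl cor a x)"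
  by (simp add: corefl_eq fun_eq_iff pair_simps algebra_simps)

lemma pair_rrefl: "pair (rrefl cor a x) l = pair x (corefl cor a l)"
  by (simp add: rrefl_eq corefl_eq pair_simps algebra_simps)

definition coroot_form :: "('n::finite \<Rightarrow> int) set \<Rightarrow> (('n \<Rightarrow> int) \<Rightarrow> ('n \<Rightarrow> int))
    \<Rightarrow> ('n \<Rightarrow> int) \<Rightarrow> ('n \<Rightarrow> int) \<Rightarrow> int" where
  "coroot_form R cor x y = (\<Sum>b\<in>R. pair x (cor b) * pair y (cor b))"

lemma coroot_form_commute: "coroot_form R cor x y = coroot_form R cor y x"
  unfolding coroot_form_def by (simp add: mult.commute)

interpretation coroot_form_left: additive "\<lambda>x. coroot_form R cor x y"
  by standard (simp add: coroot_form_def pair_simps distrib_right sum.distrib)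

interpretation coroot_form_right: additive "coroot_form R cor x"
  by standard (simp add: coroot_form_def pair_simps distrib_left sum.distrib)

lemma coroot_form_smul_left: "coroot_form R cor (smul k x) y = k * coroot_form R cor x y"
  unfolding coroot_form_def by (simp add: pair_smul_left sum_distrib_left mult.assoc)

lemma coroot_form_smul_right: "coroot_form R cor x (smul k y) = k * coroot_form R cor x y"
  by (metis coroot_form_commute coroot_form_smul_left)

lemma coroot_form_nonneg: "coroot_form R cor x x \<ge> 0"
  unfolding coroot_form_def by (auto intro: sum_nonneg)

lemma coroot_form_Cauchy_Schwarz:
  "(coroot_form R cor x y)\<^sup>2 \<le> coroot_form R cor x x * coroot_form R cor y y"
proof -
  let ?B = "coroot_form R cor"
  define s where "s = ?B y y"
  define t where "t = ?B x y"
  have "0 \<le> ?B (smul s x - smul t y) (smul s x - smul t y)" by (rule coroot_form_nonneg)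
  also have "\<dots> = s * (s * ?B x x - t * t)"
    by (simp add: coroot_form_left.diff coroot_form_right.diff coroot_form_smul_left
        coroot_form_smul_right s_def t_def coroot_form_commute[of R cor y x] algebra_simps)
  finally have "s = 0 \<or> t * t \<le> s * ?B x x"
    using coroot_form_nonneg[of R cor y] by (auto simp: zero_le_mult_iff s_def)
  moreover have "t = 0" if "s = 0"
  proof (cases "finite R")
    case True
    with \<open>s = 0\<close> have "\<forall>b\<in>R. pair y (cor b) * pair y (cor b) = 0"
      unfolding s_def coroot_form_def by (subst (asm) sum_nonneg_eq_0_iff) auto
    thus "t = 0" unfolding t_def coroot_form_def by simp
  qed (simp add: t_def coroot_form_def)
  ultimately show ?thesis
    using coroot_form_nonneg[of R cor x] unfolding power2_eq_square t_def s_def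
    by (auto simp: mult.commute)
qed

locale reduced_root_datum =
  fixes R :: "('n::finite \<Rightarrow> int) set" and cor :: "('n \<Rightarrow> int) \<Rightarrow> ('n \<Rightarrow> int)"
  assumes root_datum: "root_datum R cor"
begin

abbreviation "Phi \<equiv> cor ` R"
abbreviation "B \<equiv> coroot_form R cor"

lemma finite_roots: "finite R"
  using root_datum unfolding root_datum_def by auto

lemma inj_on_cor: "inj_on cor R"
  using root_datum unfolding root_datum_def by auto

lemma pair_root_coroot: "a \<in> R \<Longrightarrow> pair a (cor a) = 2"
  using root_datum unfolding root_datum_def by auto

lemma rrefl_root: "a \<in> R \<Longrightarrow> b \<in> R \<Longrightarrow> rrefl cor a b \<in> R"
  using root_datum unfolding root_datum_def by auto

lemma corefl_coroot: "a \<in> R \<Longrightarrow> b \<in> R \<Longrightarrow> corefl cor a (cor b) \<in> Phi"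
  using root_datum unfolding root_datum_def by auto

lemma double_root_notin: "a \<in> R \<Longrightarrow> (\<lambda>i. 2 * a i) \<notin> R"
  using root_datum unfolding root_datum_def by auto

lemma root_nonzero: "a \<in> R \<Longrightarrow> a \<noteq> 0"
  using pair_root_coroot[of a] by (auto simp: pair_left.zero)

lemma rrefl_root_self: "a \<in> R \<Longrightarrow> rrefl cor a a = - a"
  by (simp add: rrefl_def fun_eq_iff pair_root_coroot)

lemma corefl_coroot_self: "a \<in> R \<Longrightarrow> corefl cor a (cor a) = - cor a"
  by (simp add: corefl_def fun_eq_iff pair_root_coroot)

lemma rrefl_involution: "a \<in> R \<Longrightarrow> rrefl cor a (rrefl cor a x) = x"
  by (simp add: rrefl_eq pair_simps pair_root_coroot fun_eq_iff)

lemma corefl_involution: "a \<in> R \<Longrightarrow> corefl cor a (corefl cor a l) = l"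
  by (simp add: corefl_eq pair_simps pair_root_coroot fun_eq_iff)

lemma corefl_bij_coroots: "a \<in> R \<Longrightarrow> bij_betw (corefl cor a) Phi Phi"
  by (rule bij_betw_byWitness[where f' = "corefl cor a"])
    (use corefl_involution corefl_coroot in auto)

lemma coroot_form_rrefl: "a \<in> R \<Longrightarrow> B (rrefl cor a x) (rrefl cor a y) = B x y"
proof -
  assume a: "a \<in> R"
  have "B (rrefl cor a x) (rrefl cor a y)
      = (\<Sum>g\<in>Phi. pair x (corefl cor a g) * pair y (corefl cor a g))"
    unfolding coroot_form_def pair_rrefl by (subst sum.reindex[OF inj_on_cor]) simp
  also have "\<dots> = (\<Sum>g\<in>Phi. pair x g * pair y g)"
    by (rule sum.reindex_bij_betw[OF corefl_bij_coroots[OF a]])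
  also have "\<dots> = B x y"
    unfolding coroot_form_def by (subst sum.reindex[OF inj_on_cor]) simp
  finally show ?thesis .
qed

lemma pair_coroot_form: "a \<in> R \<Longrightarrow> pair x (cor a) * B a a = 2 * B a x"
proof -
  assume a: "a \<in> R"
  have "B x a = B (rrefl cor a x) (rrefl cor a a)" using coroot_form_rrefl[OF a] by simp
  also have "\<dots> = - B x a + pair x (cor a) * B a a"
    by (simp add: rrefl_root_self a rrefl_eq[of cor a x] coroot_form_left.diff
        coroot_form_right.minus coroot_form_smul_left)
  finally show ?thesis by (simp add: coroot_form_commute[of R cor x a])
qed

lemma coroot_form_root_ge: "a \<in> R \<Longrightarrow> B a a \<ge> 4"
proof -
  assume a: "a \<in> R"
  have "pair a (cor a) * pair a (cor a) \<le> B a a"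
    unfolding coroot_form_def by (rule member_le_sum[OF a]) (auto simp: finite_roots)
  thus ?thesis using pair_root_coroot[OF a] by simp
qed

text \<open>Otherwise the composite of the reflections in \<open>c\<close> and \<open>c'\<close> translates \<open>c'\<close>
  by \<open>2(c - c')\<close>, producing infinitely many roots.\<close>
lemma root_eq_if_pairs_two:
  assumes c: "c \<in> R" and c': "c' \<in> R"
    and cc': "pair c (cor c') = 2" and c'c: "pair c' (cor c) = 2"
  shows "c = c'"
proof (rule ccontr)
  assume ne: "c \<noteq> c'"
  define v where "v = c - c'"
  have v_c: "pair v (cor c) = 0" using c'c pair_root_coroot[OF c] by (simp add: v_def pair_simps)
  have v_c': "pair v (cor c') = 0" using cc' pair_root_coroot[OF c'] by (simp add: v_def pair_simps)
  have string: "c' + smul (2 * int m) v \<in> R" for m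
  proof (induct m)
    case 0 then show ?case using c' by simp
  next
    case (Suc m)
    define x where "x = c' + smul (2 * int m) v"
    define y where "y = rrefl cor c' x"
    have "pair x (cor c') = 2" using v_c' pair_root_coroot[OF c'] by (simp add: x_def pair_simps)
    hence y_eq: "y = x - smul 2 c'" by (simp add: y_def rrefl_eq)
    have "pair y (cor c) = -2" using v_c c'c by (simp add: y_eq x_def pair_simps)
    hence "rrefl cor c y = y + smul 2 c" by (simp add: rrefl_eq fun_eq_iff)
    also have "\<dots> = c' + smul (2 * int (Suc m)) v"
      by (simp add: y_eq x_def v_def fun_eq_iff algebra_simps)
    finally have "rrefl cor c y = c' + smul (2 * int (Suc m)) v" .
    with rrefl_root[OF c rrefl_root[OF c' Suc[folded x_def]]] show ?case by (simp only: y_def)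
  qed
  obtain i where "v i \<noteq> 0" using ne unfolding v_def by (auto simp: fun_eq_iff)
  hence "inj (\<lambda>m. c' + smul (2 * int m) v)" by (intro injI) (auto simp: fun_eq_iff)
  hence "infinite (range (\<lambda>m. c' + smul (2 * int m) v))" by (simp add: range_inj_infinite)
  thus False using string finite_roots by (meson finite_subset image_subset_iff)
qed

lemma cor_rrefl:
  assumes a: "a \<in> R" and b: "b \<in> R" shows "cor (rrefl cor a b) = corefl cor a (cor b)"
proof -
  define c where "c = rrefl cor a b"
  have c: "c \<in> R" unfolding c_def using rrefl_root a b by simp
  obtain c' where c': "c' \<in> R" "corefl cor a (cor b) = cor c'" using corefl_coroot[OF a b] by auto
  have Bc: "B c c = B b b" unfolding c_def by (rule coroot_form_rrefl[OF a])
  have pair_c': "pair x (cor c') * B c c = 2 * B c x" for x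
  proof -
    have "pair x (cor c') * B c c = 2 * B b (rrefl cor a x)"
      using pair_coroot_form[OF b, of "rrefl cor a x"] Bc c' by (simp add: pair_rrefl)
    also have "B b (rrefl cor a x) = B c x" unfolding c_def
      using coroot_form_rrefl[OF a, of b "rrefl cor a x"] rrefl_involution[OF a] by simp
    finally show ?thesis .
  qed
  have Bc_pos: "B c c > 0" using coroot_form_root_ge[OF c] by simp
  have e1: "pair c (cor c') = 2" using pair_c'[of c] Bc_pos by simp
  have "B c c' = B c c" using pair_c'[of c'] pair_root_coroot[OF c'(1)] by simp
  hence e2: "pair c' (cor c) = 2" using pair_coroot_form[OF c, of c'] Bc_pos by simp
  show ?thesis using root_eq_if_pairs_two[OF c c'(1) e1 e2] c' c_def by simp
qed

lemma pair_coroot_product: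
  assumes a: "a \<in> R" and d: "d \<in> R" and pos: "pair d (cor a) > 0"
  shows "pair a (cor d) > 0" and "pair d (cor a) * pair a (cor d) \<le> 4"
proof -
  define k where "k = pair d (cor a)"
  define l where "l = pair a (cor d)"
  have Baa: "B a a > 0" and Bdd: "B d d > 0"
    using coroot_form_root_ge[OF a] coroot_form_root_ge[OF d] by auto
  have e1: "k * B a a = 2 * B a d" unfolding k_def by (rule pair_coroot_form[OF a])
  have e2: "l * B d d = 2 * B a d"
    unfolding l_def using pair_coroot_form[OF d, of a] coroot_form_commute by metis
  have "2 * B a d > 0" using e1 pos Baa k_def by (metis mult_pos_pos)
  hence "l * B d d > 0" using e2 by simp
  thus "pair a (cor d) > 0" using zero_less_mult_pos2[OF _ Bdd] l_def by blast
  have "(k * l) * (B a a * B d d) = (k * B a a) * (l * B d d)" by (simp add: mult_ac)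
  also have "\<dots> = 4 * (B a d)\<^sup>2" unfolding e1 e2 by (simp add: power2_eq_square)
  also have "\<dots> \<le> 4 * (B a a * B d d)" using coroot_form_Cauchy_Schwarz by simp
  finally show "pair d (cor a) * pair a (cor d) \<le> 4"
    using Baa Bdd unfolding k_def l_def by (simp add: mult_le_cancel_right)
qed

lemma diff_root_if_pair_one:
  assumes "a \<in> R" "d \<in> R" "pair d (cor a) = 1" shows "d - a \<in> R"
  using rrefl_root[OF assms(1,2)] assms(3) by (simp add: rrefl_eq)

lemma root_positive_multiple:
  assumes a: "a \<in> R" and ka: "smul k a \<in> R" and k: "k > 0" shows "k = 1"
proof -
  have "pair a (cor (smul k a)) * (k * (k * B a a)) = 2 * (k * B a a)"
    using pair_coroot_form[OF ka, of a] by (simp add: coroot_form_smul_left coroot_form_smul_right)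
  hence "pair a (cor (smul k a)) * k = 2" using k coroot_form_root_ge[OF a] by (simp add: algebra_simps)
  hence "k \<le> 2" using zdvd_imp_le[of k 2] by (metis dvd_triv_right zero_less_numeral)
  moreover have "k \<noteq> 2" using double_root_notin[OF a] ka by (auto simp: smul_def)
  ultimately show "k = 1" using k by linarith
qed

lemma uminus_root: "a \<in> R \<Longrightarrow> - a \<in> R"
  using rrefl_root[of a a] rrefl_root_self by simp

lemma cor_uminus: "a \<in> R \<Longrightarrow> cor (- a) = - cor a"
  using cor_rrefl[of a a] rrefl_root_self corefl_coroot_self by simp

lemma corefl_uminus: "a \<in> R \<Longrightarrow> corefl cor (- a) = corefl cor a"
  by (simp add: corefl_def cor_uminus fun_eq_iff pair_simps)

end

section \<open>Positive systems and simple roots\<close>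

lemma sum_smul_single:
  assumes "finite A" "\<alpha> \<in> A" "\<forall>\<delta>\<in>A. \<delta> \<noteq> \<alpha> \<longrightarrow> c \<delta> = 0"
  shows "(\<Sum>\<delta>\<in>A. smul (c \<delta>) \<delta>) = smul (c \<alpha>) \<alpha>"
proof -
  have "(\<Sum>\<delta>\<in>A. smul (c \<delta>) \<delta>) = (\<Sum>\<delta>\<in>A. if \<delta> = \<alpha> then smul (c \<alpha>) \<alpha> else 0)"
    by (rule sum.cong) (use assms in auto)
  thus ?thesis using assms by simp
qed

locale positive_root_datum = reduced_root_datum R cor
  for R :: "('n::finite \<Rightarrow> int) set" and cor +
  fixes Rp :: "('n \<Rightarrow> int) set" and xi :: "'n \<Rightarrow> real"
  assumes regular: "\<forall>a\<in>R. real_pair xi a \<noteq> 0"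
    and pos_roots_eq: "Rp = {a\<in>R. real_pair xi a > 0}"
begin

abbreviation "Delta \<equiv> simple_roots Rp"

lemma pos_root_height: "a \<in> Rp \<Longrightarrow> real_pair xi a > 0"
  using pos_roots_eq by auto

lemma pos_root_root: "a \<in> Rp \<Longrightarrow> a \<in> R"
  using pos_roots_eq by auto

lemma finite_pos_roots: "finite Rp"
  using finite_roots by (simp add: pos_roots_eq)

lemma root_pos_or_neg: "a \<in> R \<Longrightarrow> a \<in> Rp \<or> - a \<in> Rp"
  using regular uminus_root[of a] pos_roots_eq by (auto simp: real_pair.minus)

lemma pos_root_uminus: "a \<in> Rp \<Longrightarrow> - a \<notin> Rp"
  using pos_roots_eq by (auto simp: real_pair.minus)

lemma simple_root_pos: "\<alpha> \<in> Delta \<Longrightarrow> \<alpha> \<in> Rp"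
  unfolding simple_roots_def by auto

lemma simple_root_root: "\<alpha> \<in> Delta \<Longrightarrow> \<alpha> \<in> R"
  using simple_root_pos pos_root_root by blast

lemma finite_simple_roots: "finite Delta"
  using finite_pos_roots unfolding simple_roots_def by simp

lemma simple_root_not_sum: "a \<in> Delta \<Longrightarrow> b \<in> Rp \<Longrightarrow> c \<in> Rp \<Longrightarrow> a \<noteq> b + c"
  unfolding simple_roots_def plus_fun_def by auto

definition height_rank :: "('n \<Rightarrow> int) \<Rightarrow> nat" where
  "height_rank \<beta> = card {a\<in>Rp. real_pair xi a < real_pair xi \<beta>}"

lemma height_rank_less:
  assumes "x \<in> Rp" "real_pair xi x < real_pair xi \<beta>" shows "height_rank x < height_rank \<beta>"
  unfolding height_rank_def
proof (rule psubset_card_mono)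
  show "finite {a\<in>Rp. real_pair xi a < real_pair xi \<beta>}" using finite_pos_roots by simp
  show "{a\<in>Rp. real_pair xi a < real_pair xi x} \<subset> {a\<in>Rp. real_pair xi a < real_pair xi \<beta>}"
    using assms by auto
qed

definition simple_comb :: "(('n \<Rightarrow> int) \<Rightarrow> int) \<Rightarrow> ('n \<Rightarrow> int)" where
  "simple_comb c = (\<Sum>\<delta>\<in>Delta. smul (c \<delta>) \<delta>)"

lemma simple_comb_add: "simple_comb (\<lambda>\<delta>. c \<delta> + d \<delta>) = simple_comb c + simple_comb d"
  unfolding simple_comb_def smul_add_left sum.distrib ..

lemma pair_simple_comb: "pair (simple_comb c) l = (\<Sum>\<delta>\<in>Delta. c \<delta> * pair \<delta> l)"
  unfolding simple_comb_def by (simp add: pair_simps)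

lemma real_pair_simple_comb: "real_pair xi (simple_comb c) = (\<Sum>\<delta>\<in>Delta. c \<delta> * real_pair xi \<delta>)"
  unfolding simple_comb_def by (simp add: real_pair.sum real_pair_smul)

lemma coroot_form_simple_comb: "B (simple_comb c) x = (\<Sum>\<delta>\<in>Delta. c \<delta> * B \<delta> x)"
  unfolding simple_comb_def by (simp add: coroot_form_left.sum coroot_form_smul_left)

lemma pos_root_simple_expansion: "\<beta> \<in> Rp \<Longrightarrow> \<exists>c. (\<forall>\<delta>. 0 \<le> c \<delta>) \<and> \<beta> = simple_comb c"
proof (induction "height_rank \<beta>" arbitrary: \<beta> rule: less_induct)
  case less
  show ?case
  proof (cases "\<beta> \<in> Delta")
    case True
    define c where "c = (\<lambda>\<delta>. if \<delta> = \<beta> then 1 else (0::int))"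
    have "simple_comb c = \<beta>"
      unfolding simple_comb_def using sum_smul_single[OF finite_simple_roots True, of c]
      by (simp add: c_def)
    thus ?thesis by (intro exI[of _ c]) (auto simp: c_def)
  next
    case False
    then obtain b c where bc: "b \<in> Rp" "c \<in> Rp" "\<beta> = b + c"
      using less.prems unfolding simple_roots_def plus_fun_def by auto
    have smaller: "height_rank x < height_rank \<beta>" if "x \<in> {b, c}" for x
      using that bc pos_root_height[of b] pos_root_height[of c]
      by (intro height_rank_less) (auto simp: real_pair.add)
    obtain cb cc where "\<forall>\<delta>. 0 \<le> cb \<delta>" "b = simple_comb cb" "\<forall>\<delta>. 0 \<le> cc \<delta>" "c = simple_comb cc"
      using less.hyps[OF smaller] bc by blast
    thus ?thesis using bc(3) simple_comb_add[of cb cc]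
      by (intro exI[of _ "\<lambda>\<delta>. cb \<delta> + cc \<delta>"]) auto
  qed
qed

lemma simple_diff_not_root:
  assumes a: "\<alpha> \<in> Delta" and d: "\<delta> \<in> Delta" shows "\<delta> - \<alpha> \<notin> R"
proof
  assume r: "\<delta> - \<alpha> \<in> R"
  show False
  proof (cases "\<delta> - \<alpha> \<in> Rp")
    case True
    with simple_root_not_sum[OF d simple_root_pos[OF a]] show False by (metis add.commute diff_add_cancel)
  next
    case False
    hence "\<alpha> - \<delta> \<in> Rp" using root_pos_or_neg[OF r] by simp
    with simple_root_not_sum[OF a simple_root_pos[OF d]] show False by (metis add.commute diff_add_cancel)
  qed
qed

lemma simple_pair_nonpos:
  assumes a: "\<alpha> \<in> Delta" and d: "\<delta> \<in> Delta" and ne: "\<alpha> \<noteq> \<delta>"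
  shows "pair \<delta> (cor \<alpha>) \<le> 0"
proof (rule ccontr)
  assume "\<not> pair \<delta> (cor \<alpha>) \<le> 0"
  hence k: "pair \<delta> (cor \<alpha>) > 0" by simp
  have aR: "\<alpha> \<in> R" and dR: "\<delta> \<in> R" using a d simple_root_root by auto
  note l = pair_coroot_product[OF aR dR k]
  have "pair \<delta> (cor \<alpha>) \<noteq> 1" using diff_root_if_pair_one[OF aR dR] simple_diff_not_root[OF a d] by blast
  moreover have "pair \<alpha> (cor \<delta>) \<noteq> 1"
    using diff_root_if_pair_one[OF dR aR] uminus_root simple_diff_not_root[OF a d] by fastforce
  ultimately have "pair \<delta> (cor \<alpha>) \<ge> 2" "pair \<alpha> (cor \<delta>) \<ge> 2" using k l by auto
  hence "pair \<delta> (cor \<alpha>) = 2" "pair \<alpha> (cor \<delta>) = 2" using int_mult_le_four_eq_two l(2) by blast+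
  thus False using root_eq_if_pairs_two[OF dR aR] ne by simp
qed

lemma simple_comb_not_multiple_simple:
  assumes a: "\<alpha> \<in> Delta" and e: "\<forall>\<delta>. 0 \<le> e \<delta>"
    and d0: "\<delta>0 \<in> Delta" "\<delta>0 \<noteq> \<alpha>" "e \<delta>0 > 0"
  shows "simple_comb e \<noteq> smul m \<alpha>"
proof
  assume eq: "simple_comb e = smul m \<alpha>"
  have ht_pos: "real_pair xi \<delta> > 0" if "\<delta> \<in> Delta" for \<delta>
    using that simple_root_pos pos_root_height by blast
  have "0 < e \<delta>0 * real_pair xi \<delta>0" using d0 ht_pos by simp
  also have "\<dots> \<le> (\<Sum>\<delta>\<in>Delta - {\<alpha>}. e \<delta> * real_pair xi \<delta>)"
  proof (rule member_le_sum)
    show "0 \<le> e \<delta> * real_pair xi \<delta>" if "\<delta> \<in> Delta - {\<alpha>} - {\<delta>0}" for \<delta>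
      using that e ht_pos[of \<delta>] by simp
  qed (use d0 finite_simple_roots in auto)
  also have "\<dots> = (m - e \<alpha>) * real_pair xi \<alpha>"
    using arg_cong[OF eq, of "real_pair xi"] finite_simple_roots a
    by (simp add: real_pair_simple_comb real_pair_smul sum.remove algebra_simps)
  finally have "m > e \<alpha>" using ht_pos[OF a] by (simp add: zero_less_mult_iff)
  have "2 * m = 2 * e \<alpha> + (\<Sum>\<delta>\<in>Delta - {\<alpha>}. e \<delta> * pair \<delta> (cor \<alpha>))"
    using arg_cong[OF eq, of "\<lambda>x. pair x (cor \<alpha>)"] finite_simple_roots a
      pair_root_coroot[OF simple_root_root[OF a]]
    by (simp add: pair_simple_comb pair_smul_left sum.remove algebra_simps)
  also have "\<dots> \<le> 2 * e \<alpha>"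
    using simple_pair_nonpos[OF a] e by (auto intro!: sum_nonpos mult_nonneg_nonpos)
  finally show False using \<open>m > e \<alpha>\<close> by simp
qed

lemma rrefl_simple_pos_root:
  assumes a: "\<alpha> \<in> Delta" and b: "\<beta> \<in> Rp" and ne: "\<beta> \<noteq> \<alpha>"
  shows "rrefl cor \<alpha> \<beta> \<in> Rp"
proof (rule ccontr)
  have aR: "\<alpha> \<in> R" and bR: "\<beta> \<in> R" using a b simple_root_root pos_root_root by auto
  obtain c where c: "\<forall>\<delta>. 0 \<le> c \<delta>" "\<beta> = simple_comb c"
    using pos_root_simple_expansion[OF b] by blast
  obtain \<delta>0 where d0: "\<delta>0 \<in> Delta" "\<delta>0 \<noteq> \<alpha>" "c \<delta>0 > 0"
  proof (rule ccontr)
    assume "\<not> thesis"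
    hence "\<forall>\<delta>\<in>Delta. \<delta> \<noteq> \<alpha> \<longrightarrow> c \<delta> = 0" using that c(1) by (metis le_less)
    hence \<beta>: "\<beta> = smul (c \<alpha>) \<alpha>"
      using c(2) sum_smul_single[OF finite_simple_roots a] unfolding simple_comb_def by simp
    hence "c \<alpha> \<noteq> 0" using root_nonzero[OF bR] by auto
    hence "c \<alpha> = 1" using root_positive_multiple[OF aR] \<beta> bR c(1) by (simp add: order_neq_le_trans)
    thus False using \<beta> ne by simp
  qed
  assume "rrefl cor \<alpha> \<beta> \<notin> Rp"
  hence "- rrefl cor \<alpha> \<beta> \<in> Rp" using root_pos_or_neg[OF rrefl_root[OF aR bR]] by auto
  then obtain d where d: "\<forall>\<delta>. 0 \<le> d \<delta>" "- rrefl cor \<alpha> \<beta> = simple_comb d"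
    using pos_root_simple_expansion by blast
  have "simple_comb (\<lambda>\<delta>. c \<delta> + d \<delta>) = smul (pair \<beta> (cor \<alpha>)) \<alpha>"
    unfolding simple_comb_add c(2)[symmetric] d(2)[symmetric] by (simp add: rrefl_eq)
  moreover have "\<forall>\<delta>. 0 \<le> c \<delta> + d \<delta>" using c(1) d(1) by simp
  moreover have "c \<delta>0 + d \<delta>0 > 0" using d0(3) d(1) by (simp add: add_pos_nonneg)
  ultimately show False using simple_comb_not_multiple_simple[OF a _ d0(1,2), of "\<lambda>\<delta>. c \<delta> + d \<delta>"] by blast
qed

end

lemma involution_bij_betw_remove:
  assumes inv: "\<And>x. f (f x) = x" and into: "\<And>x. x \<in> S - {x0} \<Longrightarrow> f x \<in> S" and out: "f x0 \<notin> S"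
  shows "bij_betw f (S - {x0}) (S - {x0})"
proof -
  have "f x \<in> S - {x0}" if "x \<in> S - {x0}" for x
    using into[OF that] inv[of x] out that by auto
  thus ?thesis by (intro bij_betw_byWitness[where f' = f]) (use inv in auto)
qed

lemma additive_sum_reflecting:
  assumes "additive f" "finite S" "x0 \<in> S" "f x0 = - x0" "bij_betw f (S - {x0}) (S - {x0})"
  shows "f (\<Sum>x\<in>S. x) = (\<Sum>x\<in>S. x) - (x0 + x0)"
proof -
  have "f (\<Sum>x\<in>S. x) = (\<Sum>x\<in>S. f x)" by (rule additive.sum[OF assms(1)])
  also have "\<dots> = f x0 + (\<Sum>x\<in>S - {x0}. f x)" using assms(2,3) by (simp add: sum.remove)
  also have "(\<Sum>x\<in>S - {x0}. f x) = (\<Sum>x\<in>S - {x0}. x)"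
    by (rule sum.reindex_bij_betw[OF assms(5)])
  also have "(\<Sum>x\<in>S - {x0}. x) = (\<Sum>x\<in>S. x) - x0"
    using assms(2,3) by (simp add: sum_diff1)
  finally show ?thesis using assms(4) by (simp add: algebra_simps)
qed

context positive_root_datum
begin

abbreviation "Phi_pos \<equiv> cor ` Rp"

definition root_sum :: "'n \<Rightarrow> int" where
  "root_sum = (\<Sum>a\<in>Rp. a)"

definition two_rho :: "'n \<Rightarrow> int" where
  "two_rho = (\<Sum>\<gamma>\<in>Phi_pos. \<gamma>)"

lemma pos_coroots_subset: "Phi_pos \<subseteq> Phi"
  using pos_root_root by auto

lemma finite_pos_coroots: "finite Phi_pos"
  using finite_pos_roots by simp

lemma pos_coroot_uminus: "\<gamma> \<in> Phi_pos \<Longrightarrow> - \<gamma> \<notin> Phi_pos"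
proof
  assume "\<gamma> \<in> Phi_pos" "- \<gamma> \<in> Phi_pos"
  then obtain a b where ab: "a \<in> Rp" "b \<in> Rp" "\<gamma> = cor a" "- \<gamma> = cor b" by auto
  hence "cor b = cor (- a)" using cor_uminus pos_root_root by simp
  hence "b = - a" using inj_on_cor ab pos_root_root uminus_root by (meson inj_onD)
  thus False using pos_root_uminus ab by simp
qed

lemma coroot_pos_or_neg: "\<gamma> \<in> Phi \<Longrightarrow> \<gamma> \<in> Phi_pos \<or> - \<gamma> \<in> Phi_pos"
  using root_pos_or_neg cor_uminus by force

lemma corefl_simple_pos_coroot:
  assumes "\<alpha> \<in> Delta" "\<beta> \<in> Rp" "\<beta> \<noteq> \<alpha>" shows "corefl cor \<alpha> (cor \<beta>) \<in> Phi_pos"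
  using rrefl_simple_pos_root[OF assms] cor_rrefl[of \<alpha> \<beta>] simple_root_root pos_root_root assms
  by (metis imageI)

lemma rrefl_simple_permutes:
  assumes a: "\<alpha> \<in> Delta" shows "bij_betw (rrefl cor \<alpha>) (Rp - {\<alpha>}) (Rp - {\<alpha>})"
proof (rule involution_bij_betw_remove)
  show "rrefl cor \<alpha> (rrefl cor \<alpha> x) = x" for x by (rule rrefl_involution[OF simple_root_root[OF a]])
  show "rrefl cor \<alpha> x \<in> Rp" if "x \<in> Rp - {\<alpha>}" for x
    using that rrefl_simple_pos_root[OF a] by blast
  show "rrefl cor \<alpha> \<alpha> \<notin> Rp"
    using rrefl_root_self pos_root_uminus simple_root_root simple_root_pos a by simp
qed

lemma corefl_simple_permutes:
  assumes a: "\<alpha> \<in> Delta"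
  shows "bij_betw (corefl cor \<alpha>) (Phi_pos - {cor \<alpha>}) (Phi_pos - {cor \<alpha>})"
proof (rule involution_bij_betw_remove)
  show "corefl cor \<alpha> (corefl cor \<alpha> x) = x" for x
    by (rule corefl_involution[OF simple_root_root[OF a]])
  show "corefl cor \<alpha> x \<in> Phi_pos" if "x \<in> Phi_pos - {cor \<alpha>}" for x
    using that corefl_simple_pos_coroot[OF a] by blast
  show "corefl cor \<alpha> (cor \<alpha>) \<notin> Phi_pos"
    using corefl_coroot_self pos_coroot_uminus simple_root_root simple_root_pos a by simp
qed

lemma pair_root_sum_simple: "\<alpha> \<in> Delta \<Longrightarrow> pair root_sum (cor \<alpha>) = 2"
proof -
  assume a: "\<alpha> \<in> Delta"
  have "rrefl cor \<alpha> root_sum = root_sum - smul 2 \<alpha>"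
    unfolding root_sum_def smul_two
    by (rule additive_sum_reflecting[OF rrefl.additive_axioms finite_pos_roots simple_root_pos[OF a]
          rrefl_root_self[OF simple_root_root[OF a]] rrefl_simple_permutes[OF a]])
  thus ?thesis using smul_cancel[OF root_nonzero[OF simple_root_root[OF a]]] by (simp add: rrefl_eq)
qed

lemma corefl_simple_two_rho: "\<alpha> \<in> Delta \<Longrightarrow> corefl cor \<alpha> two_rho = two_rho - smul 2 (cor \<alpha>)"
  unfolding two_rho_def smul_two
  by (rule additive_sum_reflecting[OF corefl.additive_axioms finite_pos_coroots])
    (simp_all add: simple_root_pos corefl_coroot_self simple_root_root corefl_simple_permutes)

lemma pair_simple_two_rho: "\<alpha> \<in> Delta \<Longrightarrow> pair \<alpha> two_rho = 2"
proof -
  assume a: "\<alpha> \<in> Delta"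
  have "cor \<alpha> \<noteq> 0" using pair_root_coroot[OF simple_root_root[OF a]] by (auto simp: pair_right.zero)
  thus ?thesis using corefl_simple_two_rho[OF a] smul_cancel by (simp add: corefl_eq)
qed

text \<open>The functional \<open>xi\<close> defining the positive system only controls the roots; on the
  coroots its role is taken by the sum of the positive roots.\<close>
lemma pair_root_sum_pos: "\<beta> \<in> Rp \<Longrightarrow> pair root_sum (cor \<beta>) > 0"
proof -
  assume b: "\<beta> \<in> Rp"
  have bR: "\<beta> \<in> R" using pos_root_root[OF b] .
  obtain c where c: "\<forall>\<delta>. 0 \<le> c \<delta>" "\<beta> = simple_comb c"
    using pos_root_simple_expansion[OF b] by blast
  obtain \<delta>0 where d0: "\<delta>0 \<in> Delta" "c \<delta>0 > 0"
  proof (rule ccontr)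
    assume "\<not> thesis"
    hence "\<forall>\<delta>\<in>Delta. c \<delta> = 0" using that c(1) by (metis le_less)
    hence "\<beta> = 0" using c(2) by (simp add: simple_comb_def)
    thus False using root_nonzero[OF bR] by simp
  qed
  have "B \<delta> root_sum = B \<delta> \<delta>" if d: "\<delta> \<in> Delta" for \<delta>
    using pair_coroot_form[OF simple_root_root[OF d], of root_sum] pair_root_sum_simple[OF d] by simp
  hence "B \<beta> root_sum = (\<Sum>\<delta>\<in>Delta. c \<delta> * B \<delta> \<delta>)"
    unfolding c(2) coroot_form_simple_comb by simp
  also have "\<dots> > 0"
  proof (rule sum_pos2[OF finite_simple_roots d0(1)])
    show "0 < c \<delta>0 * B \<delta>0 \<delta>0" using d0 coroot_form_root_ge[OF simple_root_root[OF d0(1)]] by simp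
    show "\<And>i. i \<in> Delta \<Longrightarrow> 0 \<le> c i * B i i" using c(1) by (simp add: coroot_form_nonneg)
  qed
  finally have "2 * B \<beta> root_sum > 0" by simp
  thus ?thesis using pair_coroot_form[OF bR, of root_sum] coroot_form_root_ge[OF bR]
    by (metis zero_less_mult_pos2 dual_order.strict_trans1 zero_less_numeral)
qed

lemma pair_root_sum_pos_coroot: "\<gamma> \<in> Phi_pos \<Longrightarrow> pair root_sum \<gamma> > 0"
  using pair_root_sum_pos by auto

lemma pos_coroots_sum_zero: "S \<subseteq> Phi_pos \<Longrightarrow> (\<Sum>\<gamma>\<in>S. \<gamma>) = 0 \<Longrightarrow> S = {}"
proof (rule ccontr)
  assume S: "S \<subseteq> Phi_pos" "(\<Sum>\<gamma>\<in>S. \<gamma>) = 0" "S \<noteq> {}"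
  have "finite S" using S finite_pos_coroots finite_subset by auto
  hence "(\<Sum>\<gamma>\<in>S. pair root_sum \<gamma>) > 0" using S pair_root_sum_pos_coroot by (intro sum_pos) auto
  thus False using S by (simp flip: pair_right.sum add: pair_right.zero)
qed

lemma pair_pos_root_nonpos: "\<forall>\<alpha>\<in>Delta. pair \<alpha> \<mu> \<le> 0 \<Longrightarrow> \<beta> \<in> Rp \<Longrightarrow> pair \<beta> \<mu> \<le> 0"
proof -
  assume h: "\<forall>\<alpha>\<in>Delta. pair \<alpha> \<mu> \<le> 0" and b: "\<beta> \<in> Rp"
  obtain c where c: "\<forall>\<delta>. 0 \<le> c \<delta>" "\<beta> = simple_comb c"
    using pos_root_simple_expansion[OF b] by blast
  have "pair \<beta> \<mu> = (\<Sum>\<delta>\<in>Delta. c \<delta> * pair \<delta> \<mu>)" unfolding c(2) by (rule pair_simple_comb)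
  also have "\<dots> \<le> 0" using h c(1) by (intro sum_nonpos) (simp add: mult_nonneg_nonpos)
  finally show ?thesis .
qed

end

section \<open>Words in simple reflections and the length function\<close>

definition word :: "(('n::finite \<Rightarrow> int) \<Rightarrow> ('n \<Rightarrow> int)) \<Rightarrow> ('n \<Rightarrow> int) list
    \<Rightarrow> ('n \<Rightarrow> int) \<Rightarrow> ('n \<Rightarrow> int)" where
  "word cor as = foldr (\<lambda>a f. corefl cor a \<circ> f) as id"

definition rword :: "(('n::finite \<Rightarrow> int) \<Rightarrow> ('n \<Rightarrow> int)) \<Rightarrow> ('n \<Rightarrow> int) list
    \<Rightarrow> ('n \<Rightarrow> int) \<Rightarrow> ('n \<Rightarrow> int)" where
  "rword cor as = foldr (\<lambda>a f. rrefl cor a \<circ> f) as id"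

lemma word_Nil [simp]: "word cor [] = id"
  by (simp add: word_def)

lemma word_Cons [simp]: "word cor (a # as) = corefl cor a \<circ> word cor as"
  by (simp add: word_def)

lemma word_append: "word cor (as @ bs) = word cor as \<circ> word cor bs"
  by (induction as) auto

lemma word_snoc: "word cor (as @ [a]) = word cor as \<circ> corefl cor a"
  by (simp add: word_append)

lemma rword_Nil [simp]: "rword cor [] = id"
  by (simp add: rword_def)

lemma rword_Cons [simp]: "rword cor (a # as) = rrefl cor a \<circ> rword cor as"
  by (simp add: rword_def)

interpretation word: additive "word cor as"
  by standard (induction as, simp_all add: corefl.add)

lemma word_smul: "word cor as (smul k x) = smul k (word cor as x)"
proof (induction as)
  case (Cons a as) then show ?case by (simp only: word_Cons comp_apply corefl_smul)
qed simp

lemma pair_rword: "pair (rword cor as x) l = pair x (word cor (rev as) l)"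
  by (induction as arbitrary: x l) (auto simp: pair_rrefl word_append)

context reduced_root_datum
begin

lemma word_rev_inverse: "set as \<subseteq> R \<Longrightarrow> word cor (rev as) (word cor as x) = x"
  by (induction as arbitrary: x) (auto simp: word_append corefl_involution)

lemma word_inverse_rev: "set as \<subseteq> R \<Longrightarrow> word cor as (word cor (rev as) x) = x"
  using word_rev_inverse[of "rev as"] by simp

lemma inj_word: "set as \<subseteq> R \<Longrightarrow> inj (word cor as)"
  by (metis injI word_rev_inverse)

lemma rword_root: "set as \<subseteq> R \<Longrightarrow> b \<in> R \<Longrightarrow> rword cor as b \<in> R"
  by (induction as) (auto simp: rrefl_root)

lemma cor_rword: "set as \<subseteq> R \<Longrightarrow> b \<in> R \<Longrightarrow> cor (rword cor as b) = word cor as (cor b)"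
  by (induction as) (auto simp: cor_rrefl rword_root)

lemma word_coroot: "set as \<subseteq> R \<Longrightarrow> \<gamma> \<in> Phi \<Longrightarrow> word cor as \<gamma> \<in> Phi"
  using cor_rword rword_root by force

lemma word_bij_coroots: "set as \<subseteq> R \<Longrightarrow> bij_betw (word cor as) Phi Phi"
  by (rule bij_betw_byWitness[where f' = "word cor (rev as)"])
    (use word_rev_inverse word_inverse_rev word_coroot[of as] word_coroot[of "rev as"] in auto)

lemma corefl_rword:
  assumes as: "set as \<subseteq> R" and b: "b \<in> R"
  shows "corefl cor (rword cor as b) = word cor as \<circ> corefl cor b \<circ> word cor (rev as)"
proof
  fix l
  have "corefl cor (rword cor as b) l = l - smul (pair b (word cor (rev as) l)) (word cor as (cor b))"
    by (simp add: corefl_eq pair_rword cor_rword[OF as b])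
  also have "\<dots> = word cor as (corefl cor b (word cor (rev as) l))"
    by (simp add: corefl_eq word.diff word_smul word_inverse_rev[OF as])
  finally show "corefl cor (rword cor as b) l = (word cor as \<circ> corefl cor b \<circ> word cor (rev as)) l"
    by simp
qed

lemma weyl_group_word: "w \<in> weyl_group R cor \<Longrightarrow> \<exists>as. set as \<subseteq> R \<and> w = word cor as"
proof (induction rule: weyl_group.induct)
  case weyl_id then show ?case by (intro exI[of _ "[]"]) simp
next
  case (weyl_step w a)
  then obtain as where "set as \<subseteq> R" "w = word cor as" by auto
  thus ?case using weyl_step by (intro exI[of _ "a # as"]) auto
qed

lemma word_in_weyl_group: "set as \<subseteq> R \<Longrightarrow> word cor as \<in> weyl_group R cor"
  by (induction as) (auto intro: weyl_group.intros)

end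

context positive_root_datum
begin

lemma simple_word_roots: "set as \<subseteq> Delta \<Longrightarrow> set as \<subseteq> R"
  using simple_root_root by auto

lemma pos_root_pair_simple_pos: "\<beta> \<in> Rp \<Longrightarrow> \<exists>\<delta>\<in>Delta. pair \<beta> (cor \<delta>) > 0"
proof (rule ccontr)
  assume b: "\<beta> \<in> Rp" and "\<not> (\<exists>\<delta>\<in>Delta. pair \<beta> (cor \<delta>) > 0)"
  hence nonpos: "pair \<beta> (cor \<delta>) \<le> 0" if "\<delta> \<in> Delta" for \<delta> using that by auto
  obtain c where c: "\<forall>\<delta>. 0 \<le> c \<delta>" "\<beta> = simple_comb c"
    using pos_root_simple_expansion[OF b] by blast
  have "B \<delta> \<beta> \<le> 0" if d: "\<delta> \<in> Delta" for \<delta>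
  proof -
    have "pair \<beta> (cor \<delta>) * B \<delta> \<delta> \<le> 0"
      using nonpos[OF d] coroot_form_root_ge[OF simple_root_root[OF d]] by (simp add: mult_nonpos_nonneg)
    thus ?thesis using pair_coroot_form[OF simple_root_root[OF d], of \<beta>] by simp
  qed
  hence "B \<beta> \<beta> \<le> 0"
    using c(1) by (subst (1) c(2)) (auto simp: coroot_form_simple_comb intro!: sum_nonpos mult_nonneg_nonpos)
  thus False using coroot_form_root_ge[OF pos_root_root[OF b]] by simp
qed

lemma pos_root_conj_simple:
  "\<beta> \<in> Rp \<Longrightarrow> \<exists>as \<gamma>. set as \<subseteq> Delta \<and> \<gamma> \<in> Delta \<and> \<beta> = rword cor as \<gamma>"
proof (induction "height_rank \<beta>" arbitrary: \<beta> rule: less_induct)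
  case less
  show ?case
  proof (cases "\<beta> \<in> Delta")
    case True thus ?thesis by (intro exI[of _ "[]"] exI[of _ \<beta>]) auto
  next
    case False
    obtain \<delta> where d: "\<delta> \<in> Delta" "pair \<beta> (cor \<delta>) > 0"
      using pos_root_pair_simple_pos[OF less.prems] by blast
    define \<beta>' where "\<beta>' = rrefl cor \<delta> \<beta>"
    have b': "\<beta>' \<in> Rp"
      unfolding \<beta>'_def using rrefl_simple_pos_root[OF d(1) less.prems] False d(1) by blast
    have "real_pair xi \<beta>' = real_pair xi \<beta> - pair \<beta> (cor \<delta>) * real_pair xi \<delta>"
      unfolding \<beta>'_def by (simp add: rrefl_eq real_pair.diff real_pair_smul)
    moreover have "real_pair xi \<delta> > 0" using pos_root_height simple_root_pos d by blast
    ultimately have "real_pair xi \<beta>' < real_pair xi \<beta>" using d(2) by simp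
    hence "height_rank \<beta>' < height_rank \<beta>" by (rule height_rank_less[OF b'])
    then obtain as \<gamma> where ih: "set as \<subseteq> Delta" "\<gamma> \<in> Delta" "\<beta>' = rword cor as \<gamma>"
      using less.hyps b' by blast
    have "\<beta> = rrefl cor \<delta> \<beta>'"
      unfolding \<beta>'_def using rrefl_involution[OF simple_root_root[OF d(1)]] by simp
    hence "\<beta> = rword cor (\<delta> # as) \<gamma>" using ih(3) by simp
    thus ?thesis using ih d by (intro exI[of _ "\<delta> # as"] exI[of _ \<gamma>]) auto
  qed
qed

lemma corefl_simple_word: "a \<in> R \<Longrightarrow> \<exists>ws. set ws \<subseteq> Delta \<and> corefl cor a = word cor ws"
proof -
  have pos: "\<exists>ws. set ws \<subseteq> Delta \<and> corefl cor a = word cor ws" if a: "a \<in> Rp" for a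
  proof -
    obtain as \<gamma> where h: "set as \<subseteq> Delta" "\<gamma> \<in> Delta" "a = rword cor as \<gamma>"
      using pos_root_conj_simple[OF a] by auto
    have "corefl cor a = word cor as \<circ> corefl cor \<gamma> \<circ> word cor (rev as)"
      using corefl_rword[OF simple_word_roots[OF h(1)] simple_root_root[OF h(2)]] h(3) by simp
    also have "\<dots> = word cor (as @ [\<gamma>] @ rev as)" by (simp add: word_append o_assoc)
    finally show ?thesis using h by (intro exI[of _ "as @ [\<gamma>] @ rev as"]) auto
  qed
  assume a: "a \<in> R"
  show ?thesis
  proof (cases "a \<in> Rp")
    case True thus ?thesis by (rule pos)
  next
    case False
    hence "- a \<in> Rp" using root_pos_or_neg[OF a] by auto
    thus ?thesis using pos corefl_uminus[OF a] by metis
  qed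
qed

lemma weyl_group_simple_word: "w \<in> weyl_group R cor \<Longrightarrow> \<exists>ws. set ws \<subseteq> Delta \<and> w = word cor ws"
proof (induction rule: weyl_group.induct)
  case weyl_id then show ?case by (intro exI[of _ "[]"]) simp
next
  case (weyl_step w a)
  then obtain ws where ws: "set ws \<subseteq> Delta" "w = word cor ws" by auto
  obtain vs where vs: "set vs \<subseteq> Delta" "corefl cor a = word cor vs"
    using corefl_simple_word[OF weyl_step(2)] by auto
  show ?case using ws vs by (intro exI[of _ "vs @ ws"]) (auto simp: word_append)
qed

end

lemma card_filter_remove:
  assumes "finite A" "c \<in> A"
  shows "card {x\<in>A. Q x} = card {x\<in>A - {c}. Q x} + (if Q c then 1 else 0)"
proof -
  have eq: "card {x\<in>B. Q x} = (\<Sum>x\<in>B. if Q x then 1 else 0)" if "finite B" for B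
    using that by (simp add: sum.If_cases Int_def)
  show ?thesis
    unfolding eq[OF assms(1)] eq[OF finite_Diff[OF assms(1)]] using assms by (simp add: sum.remove)
qed

lemma card_filter_bij_betw:
  assumes f: "bij_betw f A A" shows "card {x\<in>A. Q (f x)} = card {x\<in>A. Q x}"
proof -
  have "f ` {x\<in>A. Q (f x)} = {x\<in>A. Q x}"
  proof (intro equalityI subsetI)
    fix y assume "y \<in> {x\<in>A. Q x}"
    then obtain x where "x \<in> A" "y = f x" "Q y" using bij_betw_imp_surj_on[OF f] by blast
    thus "y \<in> f ` {x\<in>A. Q (f x)}" by blast
  qed (use bij_betwE[OF f] in blast)
  moreover have "inj_on f {x\<in>A. Q (f x)}"
    using bij_betw_imp_inj_on[OF f] by (rule inj_on_subset) blast
  ultimately show ?thesis by (metis card_image)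
qed

context positive_root_datum
begin

definition inversion_count :: "(('n \<Rightarrow> int) \<Rightarrow> ('n \<Rightarrow> int)) \<Rightarrow> nat" where
  "inversion_count w = card {\<gamma>\<in>Phi_pos. w \<gamma> \<notin> Phi_pos}"

lemma inversion_count_snoc:
  assumes as: "set as \<subseteq> R" and a: "\<alpha> \<in> Delta"
  shows "int (inversion_count (word cor (as @ [\<alpha>])))
    = int (inversion_count (word cor as)) + (if word cor as (cor \<alpha>) \<in> Phi_pos then 1 else -1)"
proof -
  define w where "w = word cor as"
  have cP: "cor \<alpha> \<in> Phi_pos" using simple_root_pos[OF a] by simp
  define C where "C = card {\<gamma>\<in>Phi_pos - {cor \<alpha>}. w \<gamma> \<notin> Phi_pos}"
  have perm: "card {\<gamma>\<in>Phi_pos - {cor \<alpha>}. w (corefl cor \<alpha> \<gamma>) \<notin> Phi_pos} = C"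
    unfolding C_def by (rule card_filter_bij_betw[OF corefl_simple_permutes[OF a]])
  have after: "inversion_count (w \<circ> corefl cor \<alpha>) = C + (if w (- cor \<alpha>) \<notin> Phi_pos then 1 else 0)"
    unfolding inversion_count_def comp_apply card_filter_remove[OF finite_pos_coroots cP] perm
      corefl_coroot_self[OF simple_root_root[OF a]] ..
  have before: "inversion_count w = C + (if w (cor \<alpha>) \<notin> Phi_pos then 1 else 0)"
    unfolding inversion_count_def C_def by (rule card_filter_remove[OF finite_pos_coroots cP])
  have "w (cor \<alpha>) \<in> Phi" unfolding w_def using word_coroot[OF as] cP pos_coroots_subset by blast
  moreover have "w (- cor \<alpha>) = - w (cor \<alpha>)" unfolding w_def by (rule word.minus)
  ultimately have "w (- cor \<alpha>) \<in> Phi_pos \<longleftrightarrow> w (cor \<alpha>) \<notin> Phi_pos"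
    using coroot_pos_or_neg pos_coroot_uminus by auto
  thus ?thesis unfolding word_snoc w_def[symmetric] before after by auto
qed

lemma inversion_count_parity:
  "set as \<subseteq> Delta \<Longrightarrow> (-1::int) ^ inversion_count (word cor as) = (-1) ^ length as"
proof (induction as rule: rev_induct)
  case Nil
  show ?case by (simp add: inversion_count_def)
next
  case (snoc a as)
  have as: "set as \<subseteq> Delta" and a: "a \<in> Delta" using snoc.prems by auto
  define n where "n = inversion_count (word cor as)"
  define n' where "n' = inversion_count (word cor (as @ [a]))"
  have "n' = n + 1 \<or> n = n' + 1"
    using inversion_count_snoc[OF simple_word_roots[OF as] a] unfolding n_def n'_def
    by (simp split: if_splits; presburger)
  hence "(-1::int) ^ n' = - ((-1) ^ n)" by auto
  thus ?case using snoc.IH[OF as] unfolding n_def n'_def by simp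
qed

lemma exchange_position:
  "set as \<subseteq> Delta \<Longrightarrow> b \<in> Delta \<Longrightarrow> word cor as (cor b) \<notin> Phi_pos \<Longrightarrow>
   \<exists>xs a ys. as = xs @ a # ys \<and> word cor ys (cor b) = cor a"
proof (induction as)
  case Nil thus ?case using simple_root_pos by auto
next
  case (Cons a as)
  show ?case
  proof (cases "word cor as (cor b) \<in> Phi_pos")
    case False
    then obtain xs a' ys where "as = xs @ a' # ys" "word cor ys (cor b) = cor a'" using Cons by auto
    thus ?thesis by (intro exI[of _ "a # xs"] exI[of _ a'] exI[of _ ys]) auto
  next
    case True
    have a: "a \<in> Delta" using Cons.prems by auto
    have "word cor as (cor b) = cor a"
    proof (rule ccontr)
      assume "word cor as (cor b) \<noteq> cor a"
      hence "corefl cor a (word cor as (cor b)) \<in> Phi_pos - {cor a}"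
        using bij_betwE[OF corefl_simple_permutes[OF a]] True by blast
      thus False using Cons.prems by auto
    qed
    thus ?thesis by (intro exI[of _ "[]"] exI[of _ a] exI[of _ as]) auto
  qed
qed

lemma word_cancel_pair:
  assumes ys: "set ys \<subseteq> Delta" and a: "a \<in> Delta" and b: "b \<in> Delta"
    and h: "word cor ys (cor b) = cor a"
  shows "word cor (xs @ a # ys @ [b]) = word cor (xs @ ys)"
proof -
  have ysR: "set ys \<subseteq> R" using simple_word_roots[OF ys] .
  have "cor (rword cor ys b) = cor a" using cor_rword[OF ysR simple_root_root[OF b]] h by simp
  hence "rword cor ys b = a"
    using inj_on_cor rword_root[OF ysR simple_root_root[OF b]] simple_root_root[OF a] by (meson inj_onD)
  hence "corefl cor a = word cor ys \<circ> corefl cor b \<circ> word cor (rev ys)"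
    using corefl_rword[OF ysR simple_root_root[OF b]] by simp
  hence "corefl cor a (word cor ys (corefl cor b x)) = word cor ys x" for x
    using word_rev_inverse[OF ysR] corefl_involution[OF simple_root_root[OF b]] by simp
  thus ?thesis by (intro ext) (simp add: word_append)
qed

lemma deletion_condition:
  "set as \<subseteq> Delta \<Longrightarrow> inversion_count (word cor as) = length as
    \<or> (\<exists>bs. set bs \<subseteq> Delta \<and> length bs < length as \<and> word cor bs = word cor as)"
proof (induction as rule: rev_induct)
  case Nil thus ?case unfolding inversion_count_def by simp
next
  case (snoc b as)
  have as: "set as \<subseteq> Delta" and b: "b \<in> Delta" using snoc.prems by auto
  from snoc.IH[OF as] show ?case
  proof
    assume n: "inversion_count (word cor as) = length as"
    show ?thesis
    proof (cases "word cor as (cor b) \<in> Phi_pos")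
      case True
      thus ?thesis using inversion_count_snoc[OF simple_word_roots[OF as] b] n by simp
    next
      case False
      then obtain xs a ys where d: "as = xs @ a # ys" "word cor ys (cor b) = cor a"
        using exchange_position[OF as b] by auto
      have "word cor (as @ [b]) = word cor (xs @ ys)" using word_cancel_pair[of ys a b xs] d as b by auto
      thus ?thesis using d as by (intro disjI2 exI[of _ "xs @ ys"]) auto
    qed
  next
    assume "\<exists>bs. set bs \<subseteq> Delta \<and> length bs < length as \<and> word cor bs = word cor as"
    then obtain bs where "set bs \<subseteq> Delta" "length bs < length as" "word cor bs = word cor as" by auto
    thus ?thesis using b by (intro disjI2 exI[of _ "bs @ [b]"]) (auto simp: word_snoc)
  qed
qed

lemma wlength_eq_Least:
  "wlength Rp cor w = (LEAST n. \<exists>bs. set bs \<subseteq> Delta \<and> length bs = n \<and> word cor bs = w)"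
  unfolding wlength_def word_def ..

lemma shortest_word:
  assumes "set as \<subseteq> Delta"
  obtains bs where "set bs \<subseteq> Delta" "length bs = wlength Rp cor (word cor as)" "word cor bs = word cor as"
    "\<And>cs. set cs \<subseteq> Delta \<Longrightarrow> word cor cs = word cor as \<Longrightarrow> length bs \<le> length cs"
proof -
  let ?Q = "\<lambda>n. \<exists>bs. set bs \<subseteq> Delta \<and> length bs = n \<and> word cor bs = word cor as"
  have "?Q (LEAST n. ?Q n)" using assms by (intro LeastI[of ?Q "length as"]) auto
  moreover have "(LEAST n. ?Q n) \<le> length cs" if "set cs \<subseteq> Delta" "word cor cs = word cor as" for cs
    using that by (intro Least_le) auto
  ultimately show ?thesis using that unfolding wlength_eq_Least by metis
qed

lemma wlength_eq_inversion_count: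
  assumes as: "set as \<subseteq> Delta"
  shows "wlength Rp cor (word cor as) = inversion_count (word cor as)"
proof -
  obtain bs where bs: "set bs \<subseteq> Delta" "length bs = wlength Rp cor (word cor as)"
      "word cor bs = word cor as" and min: "\<And>cs. set cs \<subseteq> Delta \<Longrightarrow> word cor cs = word cor as \<Longrightarrow> length bs \<le> length cs"
    using shortest_word[OF as] by blast
  show ?thesis using deletion_condition[OF bs(1)] bs min by fastforce
qed

lemma sign_wlength_word:
  "set as \<subseteq> Delta \<Longrightarrow> (-1::int) ^ wlength Rp cor (word cor as) = (-1) ^ length as"
  using wlength_eq_inversion_count inversion_count_parity by simp

section \<open>The orbit of the sum of positive coroots\<close>

definition inversion_set :: "(('n \<Rightarrow> int) \<Rightarrow> ('n \<Rightarrow> int)) \<Rightarrow> ('n \<Rightarrow> int) set" where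
  "inversion_set w = {\<gamma>\<in>Phi_pos. \<gamma> \<notin> w ` Phi_pos}"

lemma inversion_set_subset: "inversion_set w \<subseteq> Phi_pos"
  unfolding inversion_set_def by auto

lemma uminus_word_pos_coroot:
  assumes as: "set as \<subseteq> R" and \<gamma>: "\<gamma> \<in> Phi_pos"
  shows "- word cor as \<gamma> \<notin> word cor as ` Phi_pos"
proof
  assume "- word cor as \<gamma> \<in> word cor as ` Phi_pos"
  then obtain \<gamma>' where \<gamma>': "- word cor as \<gamma> = word cor as \<gamma>'" "\<gamma>' \<in> Phi_pos" by (rule imageE)
  hence "word cor as \<gamma>' = word cor as (- \<gamma>)" by (metis word.minus)
  hence "\<gamma>' = - \<gamma>" using injD[OF inj_word[OF as]] by blast
  thus False using \<gamma>'(2) pos_coroot_uminus[OF \<gamma>] by simp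
qed

lemma word_image_pos_coroots:
  assumes as: "set as \<subseteq> R"
  shows "word cor as ` Phi_pos = (Phi_pos - inversion_set (word cor as)) \<union> uminus ` inversion_set (word cor as)"
    (is "?w ` _ = (_ - ?N) \<union> _")
proof (intro equalityI subsetI)
  fix x assume "x \<in> ?w ` Phi_pos"
  then obtain \<gamma> where g: "\<gamma> \<in> Phi_pos" "x = ?w \<gamma>" by auto
  have "x \<in> Phi" using g word_coroot[OF as] pos_coroots_subset by blast
  show "x \<in> (Phi_pos - ?N) \<union> uminus ` ?N"
  proof (cases "x \<in> Phi_pos")
    case True
    thus ?thesis using \<open>x \<in> ?w ` Phi_pos\<close> unfolding inversion_set_def by blast
  next
    case False
    hence "- x \<in> Phi_pos" using coroot_pos_or_neg[OF \<open>x \<in> Phi\<close>] by auto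
    hence "- x \<in> ?N" using uminus_word_pos_coroot[OF as g(1)] g(2) unfolding inversion_set_def by blast
    thus ?thesis by (metis UnI2 image_eqI minus_minus)
  qed
next
  fix x assume x: "x \<in> (Phi_pos - ?N) \<union> uminus ` ?N"
  show "x \<in> ?w ` Phi_pos"
  proof (cases "x \<in> Phi_pos - ?N")
    case True thus ?thesis unfolding inversion_set_def by blast
  next
    case False
    then obtain \<gamma> where g: "\<gamma> \<in> Phi_pos" "\<gamma> \<notin> ?w ` Phi_pos" "x = - \<gamma>"
      using x unfolding inversion_set_def by auto
    obtain \<delta> where d: "\<delta> \<in> Phi" "\<gamma> = ?w \<delta>"
      using g(1) pos_coroots_subset bij_betw_imp_surj_on[OF word_bij_coroots[OF as]] by blast
    have "- \<delta> \<in> Phi_pos" using coroot_pos_or_neg[OF d(1)] g(2) d(2) by auto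
    moreover have "?w (- \<delta>) = x" using d(2) g(3) word.minus by simp
    ultimately show ?thesis by blast
  qed
qed

lemma word_two_rho:
  assumes as: "set as \<subseteq> R"
  shows "word cor as two_rho = two_rho - smul 2 (\<Sum>\<gamma>\<in>inversion_set (word cor as). \<gamma>)"
proof -
  define w where "w = word cor as"
  define N where "N = inversion_set w"
  have N: "N \<subseteq> Phi_pos" "finite N"
    unfolding N_def using inversion_set_subset finite_pos_coroots finite_subset by blast+
  have "w two_rho = (\<Sum>\<delta>\<in>w ` Phi_pos. \<delta>)"
    unfolding two_rho_def w_def word.sum
    by (simp add: sum.reindex[OF inj_on_subset[OF inj_word[OF as] subset_UNIV]])
  also have "w ` Phi_pos = (Phi_pos - N) \<union> uminus ` N"
    unfolding w_def N_def by (rule word_image_pos_coroots[OF as])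
  also have "(\<Sum>\<delta>\<in>(Phi_pos - N) \<union> uminus ` N. \<delta>) = (\<Sum>\<delta>\<in>Phi_pos - N. \<delta>) + (\<Sum>\<delta>\<in>uminus ` N. \<delta>)"
  proof (rule sum.union_disjoint)
    show "(Phi_pos - N) \<inter> uminus ` N = {}" using N(1) pos_coroot_uminus by fastforce
  qed (use finite_pos_coroots N in auto)
  also have "(\<Sum>\<delta>\<in>uminus ` N. \<delta>) = - (\<Sum>\<delta>\<in>N. \<delta>)"
    by (simp add: sum.reindex sum_negf)
  also have "(\<Sum>\<delta>\<in>Phi_pos - N. \<delta>) = two_rho - (\<Sum>\<delta>\<in>N. \<delta>)"
    unfolding two_rho_def using sum_diff[OF finite_pos_coroots N(1)] by simp
  finally show ?thesis unfolding w_def N_def by (simp add: fun_eq_iff)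
qed

lemma rhodiff_word: "set as \<subseteq> R \<Longrightarrow> rhodiff Rp cor (word cor as) = (\<Sum>\<gamma>\<in>inversion_set (word cor as). \<gamma>)"
proof -
  assume as: "set as \<subseteq> R"
  have "(\<lambda>i. \<Sum>\<gamma>\<in>Phi_pos. \<gamma> i) = two_rho" unfolding two_rho_def by (simp add: fun_eq_iff sum_fun_apply)
  thus ?thesis unfolding rhodiff_def Let_def by (simp add: word_two_rho[OF as] fun_eq_iff)
qed

abbreviation "W \<equiv> weyl_group R cor"

lemma weyl_two_rho:
  assumes w: "w \<in> W"
  shows "w two_rho = two_rho - smul 2 (rhodiff Rp cor w)"
    and "rhodiff Rp cor w = (\<Sum>\<gamma>\<in>inversion_set w. \<gamma>)"
  using weyl_group_word[OF w] word_two_rho rhodiff_word by auto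

lemma word_fixing_two_rho:
  assumes as: "set as \<subseteq> Delta" and stab: "word cor as two_rho = two_rho"
  shows "word cor as = id"
proof -
  define w where "w = word cor as"
  have asR: "set as \<subseteq> R" using simple_word_roots[OF as] .
  have "smul 2 (\<Sum>\<gamma>\<in>inversion_set w. \<gamma>) = 0" using word_two_rho[OF asR] stab w_def by simp
  hence "(\<Sum>\<gamma>\<in>inversion_set w. \<gamma>) = 0" by (simp add: fun_eq_iff)
  hence "inversion_set w = {}" using pos_coroots_sum_zero inversion_set_subset by blast
  hence "Phi_pos \<subseteq> w ` Phi_pos" unfolding inversion_set_def by auto
  moreover have "card (w ` Phi_pos) = card Phi_pos"
    using inj_word[OF asR] w_def by (simp add: card_image inj_on_subset)
  ultimately have "w ` Phi_pos = Phi_pos"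
    using card_subset_eq[OF finite_imageI[OF finite_pos_coroots]] by metis
  hence "{\<gamma>\<in>Phi_pos. w \<gamma> \<notin> Phi_pos} = {}" by blast
  hence "inversion_count w = 0" unfolding inversion_count_def by (simp only: card.empty)
  hence "wlength Rp cor w = 0" using wlength_eq_inversion_count[OF as] w_def by simp
  then obtain bs where "length bs = 0" "word cor bs = w"
    using shortest_word[OF as] unfolding w_def by metis
  thus ?thesis unfolding w_def by simp
qed

lemma weyl_group_two_rho_inj:
  assumes w1: "w1 \<in> W" and w2: "w2 \<in> W" and eq: "w1 two_rho = w2 two_rho"
  shows "w1 = w2"
proof -
  obtain as1 where a1: "set as1 \<subseteq> Delta" "w1 = word cor as1" using weyl_group_simple_word[OF w1] by auto
  obtain as2 where a2: "set as2 \<subseteq> Delta" "w2 = word cor as2" using weyl_group_simple_word[OF w2] by auto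
  have "word cor (rev as1 @ as2) two_rho = word cor (rev as1) (word cor as1 two_rho)"
    using eq a1 a2 by (simp add: word_append)
  also have "\<dots> = two_rho" by (rule word_rev_inverse[OF simple_word_roots[OF a1(1)]])
  finally have "word cor (rev as1 @ as2) = id" using a1 a2 by (intro word_fixing_two_rho) auto
  hence "word cor (rev as1) (word cor as2 x) = x" for x by (simp add: word_append fun_eq_iff)
  hence "word cor as2 x = word cor as1 x" for x
    using word_inverse_rev[OF simple_word_roots[OF a1(1)]] by metis
  thus ?thesis using a1 a2 by auto
qed

lemma finite_weyl_group: "finite W"
proof -
  have "inj_on (\<lambda>w. w two_rho) W" by (rule inj_onI) (rule weyl_group_two_rho_inj)
  moreover have "(\<lambda>w. w two_rho) ` W \<subseteq> (\<lambda>S. two_rho - smul 2 (\<Sum>\<gamma>\<in>S. \<gamma>)) ` Pow Phi_pos"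
  proof
    fix y assume "y \<in> (\<lambda>w. w two_rho) ` W"
    then obtain w where "w \<in> W" "y = w two_rho" by blast
    thus "y \<in> (\<lambda>S. two_rho - smul 2 (\<Sum>\<gamma>\<in>S. \<gamma>)) ` Pow Phi_pos"
      using weyl_two_rho[of w] inversion_set_subset[of w] by auto
  qed
  ultimately show ?thesis
    using finite_pos_coroots by (metis finite_Pow_iff finite_imageD finite_imageI finite_subset)
qed

section \<open>The Weyl denominator formula\<close>

definition alt_weight :: "('n \<Rightarrow> int) set \<Rightarrow> ('n \<Rightarrow> int)" where
  "alt_weight S = two_rho - smul 2 (\<Sum>\<gamma>\<in>S. \<gamma>)"

text \<open>\<open>denom_coeff \<nu>\<close> is the coefficient of \<open>e\<^sup>\<nu>\<close> in \<open>\<Prod>\<^sub>\<gamma> (e\<^sup>\<gamma> - e\<^sup>-\<^sup>\<gamma>)\<close>, the product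
  over the positive coroots, i.e. the Weyl denominator written in the lattice scaled by 2.\<close>
definition denom_coeff :: "('n \<Rightarrow> int) \<Rightarrow> int" where
  "denom_coeff \<nu> = (\<Sum>S\<in>{S. S \<subseteq> Phi_pos \<and> alt_weight S = \<nu>}. (-1) ^ card S)"

text \<open>The sign-reversing involution behind the anti-invariance of \<open>denom_coeff\<close> under simple
  reflections.\<close>
definition reflect_subset :: "('n \<Rightarrow> int) \<Rightarrow> ('n \<Rightarrow> int) set \<Rightarrow> ('n \<Rightarrow> int) set" where
  "reflect_subset \<alpha> S = corefl cor \<alpha> ` (S - {cor \<alpha>}) \<union> (if cor \<alpha> \<in> S then {} else {cor \<alpha>})"

context
  fixes \<alpha> S assumes a: "\<alpha> \<in> Delta" and S: "S \<subseteq> Phi_pos"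
begin

lemma simple_coroot_pos: "cor \<alpha> \<in> Phi_pos"
  using simple_root_pos[OF a] by simp

lemma finite_subset_pos_coroots: "finite S"
  using S finite_pos_coroots finite_subset by blast

lemma inj_corefl_simple: "inj (corefl cor \<alpha>)"
  using corefl_involution[OF simple_root_root[OF a]] by (metis injI)

lemma corefl_simple_image: "corefl cor \<alpha> ` (S - {cor \<alpha>}) \<subseteq> Phi_pos - {cor \<alpha>}"
  by (rule image_subsetI) (use S bij_betwE[OF corefl_simple_permutes[OF a]] in blast)

lemma simple_coroot_notin_image: "cor \<alpha> \<notin> corefl cor \<alpha> ` (S - {cor \<alpha>})"
  using corefl_simple_image by blast

lemma reflect_subset_subset: "reflect_subset \<alpha> S \<subseteq> Phi_pos"
  unfolding reflect_subset_def using corefl_simple_image simple_coroot_pos by auto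

lemma reflect_subset_involution: "reflect_subset \<alpha> (reflect_subset \<alpha> S) = S"
proof -
  have "reflect_subset \<alpha> S - {cor \<alpha>} = corefl cor \<alpha> ` (S - {cor \<alpha>})"
    unfolding reflect_subset_def using simple_coroot_notin_image by (cases "cor \<alpha> \<in> S") auto
  moreover have "cor \<alpha> \<in> reflect_subset \<alpha> S \<longleftrightarrow> cor \<alpha> \<notin> S"
    unfolding reflect_subset_def using simple_coroot_notin_image by (cases "cor \<alpha> \<in> S") auto
  moreover have "corefl cor \<alpha> ` corefl cor \<alpha> ` (S - {cor \<alpha>}) = S - {cor \<alpha>}"
    using corefl_involution[OF simple_root_root[OF a]] by (auto simp: image_iff)
  ultimately show ?thesis unfolding reflect_subset_def[of \<alpha> "reflect_subset \<alpha> S"] by auto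
qed

lemma alt_weight_reflect_subset: "alt_weight (reflect_subset \<alpha> S) = corefl cor \<alpha> (alt_weight S)"
proof -
  let ?c = "cor \<alpha>" and ?s = "corefl cor \<alpha>"
  have "(\<Sum>\<gamma>\<in>reflect_subset \<alpha> S. \<gamma>) = (\<Sum>\<gamma>\<in>?s ` (S - {?c}). \<gamma>) + (if ?c \<in> S then 0 else ?c)"
    unfolding reflect_subset_def using finite_subset_pos_coroots simple_coroot_notin_image
    by (subst sum.union_disjoint) auto
  also have "(\<Sum>\<gamma>\<in>?s ` (S - {?c}). \<gamma>) = (\<Sum>\<gamma>\<in>S - {?c}. ?s \<gamma>)"
    by (simp add: sum.reindex[OF inj_on_subset[OF inj_corefl_simple subset_UNIV]])
  finally have reflected:
    "(\<Sum>\<gamma>\<in>reflect_subset \<alpha> S. \<gamma>) = (\<Sum>\<gamma>\<in>S - {?c}. ?s \<gamma>) + (if ?c \<in> S then 0 else ?c)" .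
  have "?s (\<Sum>\<gamma>\<in>S. \<gamma>) = (\<Sum>\<gamma>\<in>S. ?s \<gamma>)" by (rule corefl.sum)
  also have "\<dots> = (\<Sum>\<gamma>\<in>S - {?c}. ?s \<gamma>) + (if ?c \<in> S then - ?c else 0)"
    using finite_subset_pos_coroots corefl_coroot_self[OF simple_root_root[OF a]]
    by (cases "?c \<in> S") (simp_all add: sum.remove add.commute)
  finally show ?thesis
    unfolding alt_weight_def corefl.diff corefl_smul corefl_simple_two_rho[OF a] reflected
    by (auto simp: fun_eq_iff)
qed

lemma sign_reflect_subset: "(-1::int) ^ card (reflect_subset \<alpha> S) = - ((-1) ^ card S)"
proof -
  let ?A = "corefl cor \<alpha> ` (S - {cor \<alpha>})" and ?B = "if cor \<alpha> \<in> S then {} else {cor \<alpha>}"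
  define n where "n = card (S - {cor \<alpha>})"
  have "card (reflect_subset \<alpha> S) = card ?A + card ?B"
    unfolding reflect_subset_def
  proof (rule card_Un_disjoint)
    show "?A \<inter> ?B = {}" using simple_coroot_notin_image by (cases "cor \<alpha> \<in> S") simp_all
  qed (use finite_subset_pos_coroots in simp_all)
  also have "card ?A = n"
    unfolding n_def by (rule card_image[OF inj_on_subset[OF inj_corefl_simple subset_UNIV]])
  finally have "card (reflect_subset \<alpha> S) = n + (if cor \<alpha> \<in> S then 0 else 1)" by simp
  moreover have "card S = n + (if cor \<alpha> \<in> S then 1 else 0)"
    unfolding n_def using card.remove[OF finite_subset_pos_coroots, of "cor \<alpha>"]
    by (cases "cor \<alpha> \<in> S") simp_all
  ultimately show ?thesis by (cases "cor \<alpha> \<in> S") simp_all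
qed

end

lemma denom_coeff_corefl_simple:
  assumes a: "\<alpha> \<in> Delta" shows "denom_coeff (corefl cor \<alpha> \<nu>) = - denom_coeff \<nu>"
proof -
  have "denom_coeff (corefl cor \<alpha> \<nu>) = (\<Sum>T\<in>{S. S \<subseteq> Phi_pos \<and> alt_weight S = \<nu>}. - ((-1::int) ^ card T))"
    unfolding denom_coeff_def
  proof (rule sum.reindex_bij_witness[where i = "reflect_subset \<alpha>" and j = "reflect_subset \<alpha>"])
    fix S assume "S \<in> {S. S \<subseteq> Phi_pos \<and> alt_weight S = corefl cor \<alpha> \<nu>}"
    thus "reflect_subset \<alpha> (reflect_subset \<alpha> S) = S"
      "reflect_subset \<alpha> S \<in> {S. S \<subseteq> Phi_pos \<and> alt_weight S = \<nu>}"
      "- ((-1::int) ^ card (reflect_subset \<alpha> S)) = (-1) ^ card S"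
      using reflect_subset_involution[OF a] reflect_subset_subset[OF a] alt_weight_reflect_subset[OF a]
        sign_reflect_subset[OF a] corefl_involution[OF simple_root_root[OF a]] by auto
  next
    fix T assume "T \<in> {S. S \<subseteq> Phi_pos \<and> alt_weight S = \<nu>}"
    thus "reflect_subset \<alpha> (reflect_subset \<alpha> T) = T"
      "reflect_subset \<alpha> T \<in> {S. S \<subseteq> Phi_pos \<and> alt_weight S = corefl cor \<alpha> \<nu>}"
      using reflect_subset_involution[OF a] reflect_subset_subset[OF a] alt_weight_reflect_subset[OF a]
      by auto
  qed
  also have "\<dots> = - denom_coeff \<nu>" unfolding denom_coeff_def by (simp add: sum_negf)
  finally show ?thesis .
qed

lemma denom_coeff_weyl: "w \<in> W \<Longrightarrow> denom_coeff (w \<nu>) = (-1) ^ wlength Rp cor w * denom_coeff \<nu>"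
proof -
  assume "w \<in> W"
  then obtain as where as: "set as \<subseteq> Delta" "w = word cor as" using weyl_group_simple_word by blast
  have "denom_coeff (word cor as \<nu>) = (-1) ^ length as * denom_coeff \<nu>"
    using as(1) by (induction as) (simp_all add: denom_coeff_corefl_simple)
  thus ?thesis using sign_wlength_word[OF as(1)] as(2) by simp
qed

lemma denom_coeff_two_rho: "denom_coeff two_rho = 1"
proof -
  have "{S. S \<subseteq> Phi_pos \<and> alt_weight S = two_rho} = {{}}"
  proof (intro equalityI subsetI)
    fix S assume "S \<in> {S. S \<subseteq> Phi_pos \<and> alt_weight S = two_rho}"
    hence "S \<subseteq> Phi_pos" "smul 2 (\<Sum>\<gamma>\<in>S. \<gamma>) = smul 2 0" by (simp_all add: alt_weight_def)
    thus "S \<in> {{}}" using pos_coroots_sum_zero by (simp only: smul_two_eq_iff) blast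
  qed (simp add: alt_weight_def)
  thus ?thesis unfolding denom_coeff_def by simp
qed

lemma weyl_orbit_dominant: "\<exists>w\<in>W. \<forall>\<alpha>\<in>Delta. pair \<alpha> (w \<nu>) \<ge> 0"
proof -
  let ?h = "\<lambda>w. pair root_sum (w \<nu>)"
  have fin: "finite (?h ` W)" using finite_weyl_group by simp
  moreover have "?h ` W \<noteq> {}" using weyl_id by blast
  ultimately have "Max (?h ` W) \<in> ?h ` W" by (rule Max_in)
  then obtain w0 where w0: "Max (?h ` W) = ?h w0" "w0 \<in> W" by (rule imageE)
  have "pair \<alpha> (w0 \<nu>) \<ge> 0" if a: "\<alpha> \<in> Delta" for \<alpha>
  proof -
    have "corefl cor \<alpha> \<circ> w0 \<in> W" by (rule weyl_step[OF w0(2) simple_root_root[OF a]])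
    hence "?h (corefl cor \<alpha> \<circ> w0) \<le> ?h w0" unfolding w0(1)[symmetric] by (intro Max_ge[OF fin] imageI)
    moreover have "?h (corefl cor \<alpha> \<circ> w0) = ?h w0 - pair \<alpha> (w0 \<nu>) * 2"
      by (simp add: corefl_eq pair_simps pair_root_sum_simple[OF a])
    ultimately show ?thesis by simp
  qed
  thus ?thesis using w0(2) by blast
qed

lemma alt_weight_regular_dominant:
  assumes S: "S \<subseteq> Phi_pos" and pos: "\<forall>\<alpha>\<in>Delta. pair \<alpha> (alt_weight S) > 0"
  shows "S = {}"
proof (rule ccontr)
  assume "S \<noteq> {}"
  have "pair \<alpha> (\<Sum>\<gamma>\<in>S. \<gamma>) \<le> 0" if "\<alpha> \<in> Delta" for \<alpha>
  proof -
    have "pair \<alpha> (alt_weight S) = 2 - 2 * pair \<alpha> (\<Sum>\<gamma>\<in>S. \<gamma>)"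
      using pair_simple_two_rho[OF that] by (simp add: alt_weight_def pair_right.diff pair_smul_right)
    thus ?thesis using pos that by fastforce
  qed
  hence "(\<Sum>\<beta>\<in>Rp. pair \<beta> (\<Sum>\<gamma>\<in>S. \<gamma>)) \<le> 0"
    by (intro sum_nonpos pair_pos_root_nonpos) auto
  moreover have "finite S" using S finite_pos_coroots finite_subset by blast
  hence "(\<Sum>\<gamma>\<in>S. pair root_sum \<gamma>) > 0"
    using \<open>S \<noteq> {}\<close> S pair_root_sum_pos_coroot by (intro sum_pos) auto
  ultimately show False
    unfolding root_sum_def pair_left.sum[symmetric] pair_right.sum[symmetric] by simp
qed

lemma denom_coeff_support: assumes nz: "denom_coeff \<nu> \<noteq> 0" shows "\<exists>w\<in>W. \<nu> = w two_rho"
proof -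
  obtain w0 where w0: "w0 \<in> W" "\<forall>\<alpha>\<in>Delta. pair \<alpha> (w0 \<nu>) \<ge> 0"
    using weyl_orbit_dominant by blast
  have nz': "denom_coeff (w0 \<nu>) \<noteq> 0" using denom_coeff_weyl[OF w0(1)] nz by simp
  have "pair \<alpha> (w0 \<nu>) \<noteq> 0" if a: "\<alpha> \<in> Delta" for \<alpha>
  proof
    assume "pair \<alpha> (w0 \<nu>) = 0"
    hence "corefl cor \<alpha> (w0 \<nu>) = w0 \<nu>" by (simp add: corefl_eq)
    thus False using denom_coeff_corefl_simple[OF a, of "w0 \<nu>"] nz' by simp
  qed
  hence regular: "\<forall>\<alpha>\<in>Delta. pair \<alpha> (w0 \<nu>) > 0" using w0(2) by force
  obtain S where S: "S \<subseteq> Phi_pos" "alt_weight S = w0 \<nu>"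
    using nz' unfolding denom_coeff_def by (metis (mono_tags, lifting) empty_Collect_eq sum.empty)
  hence "w0 \<nu> = two_rho" using alt_weight_regular_dominant[OF S(1)] regular
    by (simp add: alt_weight_def)
  moreover obtain as where as: "set as \<subseteq> R" "w0 = word cor as" using weyl_group_word[OF w0(1)] by blast
  ultimately have "\<nu> = word cor (rev as) two_rho" using word_rev_inverse by metis
  thus ?thesis using word_in_weyl_group[of "rev as"] as(1) by auto
qed

theorem weyl_denominator_formula:
  "(\<Sum>w\<in>W. (-1::int) ^ wlength Rp cor w * (if rhodiff Rp cor w = \<mu> then 1 else 0))
   = (\<Sum>S\<in>{S. S \<subseteq> Phi_pos \<and> (\<Sum>\<gamma>\<in>S. \<gamma>) = \<mu>}. (-1) ^ card S)"
proof -
  define \<nu> where "\<nu> = two_rho - smul 2 \<mu>"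
  have "rhodiff Rp cor w = \<mu> \<longleftrightarrow> w two_rho = \<nu>" if w: "w \<in> W" for w
    unfolding \<nu>_def weyl_two_rho(1)[OF w] by (simp add: smul_two_eq_iff)
  hence "(\<Sum>w\<in>W. (-1::int) ^ wlength Rp cor w * (if rhodiff Rp cor w = \<mu> then 1 else 0))
      = (\<Sum>w\<in>W. if w two_rho = \<nu> then (-1) ^ wlength Rp cor w else 0)"
    by (intro sum.cong) auto
  also have "\<dots> = (\<Sum>w\<in>{w\<in>W. w two_rho = \<nu>}. (-1) ^ wlength Rp cor w)"
    by (rule sum.inter_filter[symmetric, OF finite_weyl_group])
  also have "\<dots> = denom_coeff \<nu>"
  proof (cases "\<exists>w0\<in>W. w0 two_rho = \<nu>")
    case True
    then obtain w0 where w0: "w0 \<in> W" "w0 two_rho = \<nu>" by auto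
    hence "{w\<in>W. w two_rho = \<nu>} = {w0}" using weyl_group_two_rho_inj by auto
    thus ?thesis using denom_coeff_weyl[OF w0(1), of two_rho] denom_coeff_two_rho w0 by simp
  next
    case False
    hence "{w\<in>W. w two_rho = \<nu>} = {}" by auto
    moreover have "denom_coeff \<nu> = 0" using denom_coeff_support False by (metis (full_types))
    ultimately show ?thesis by (simp only: sum.empty)
  qed
  also have "\<dots> = (\<Sum>S\<in>{S. S \<subseteq> Phi_pos \<and> (\<Sum>\<gamma>\<in>S. \<gamma>) = \<mu>}. (-1) ^ card S)"
    unfolding denom_coeff_def \<nu>_def alt_weight_def by (simp add: smul_two_eq_iff)
  finally show ?thesis .
qed

end

section \<open>Coefficients of products of geometric series\<close>

definition lincomb :: "'i set \<Rightarrow> ('i \<Rightarrow> nat) \<Rightarrow> ('i \<Rightarrow> ('n \<Rightarrow> int)) \<Rightarrow> ('n \<Rightarrow> int)" where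
  "lincomb I c f = (\<lambda>k. \<Sum>x\<in>I. int (c x) * f x k)"

definition partitions :: "'i set \<Rightarrow> ('i \<Rightarrow> ('n \<Rightarrow> int)) \<Rightarrow> ('n \<Rightarrow> int) \<Rightarrow> ('i \<Rightarrow> nat) set" where
  "partitions I f z = {c \<in> I \<rightarrow>\<^sub>E (UNIV :: nat set). lincomb I c f = z}"

text \<open>The coefficient of \<open>e\<^sup>z\<close> in \<open>\<Prod>\<^sub>x\<^sub>\<in>\<^sub>I (1 - t e\<^bsup>f x\<^esup>)\<^sup>-\<^sup>1\<close>.\<close>
definition gen_coeff :: "'i set \<Rightarrow> ('i \<Rightarrow> ('n \<Rightarrow> int)) \<Rightarrow> real \<Rightarrow> ('n \<Rightarrow> int) \<Rightarrow> real" where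
  "gen_coeff I f t z = (\<Sum>c\<in>partitions I f z. t ^ (\<Sum>x\<in>I. c x))"

definition mset_index :: "'a multiset \<Rightarrow> ('a \<times> nat) set" where
  "mset_index M = {(v, j). j < count M v}"

lemma geom_poly_eq:
  "geom_poly M \<mu> = (\<Sum>c\<in>partitions (mset_index M) fst \<mu>. monom 1 (\<Sum>x\<in>mset_index M. c x))"
  unfolding geom_poly_def partitions_def mset_index_def lincomb_def Let_def ..

lemma map_poly_of_int_sum:
  "map_poly (of_int :: int \<Rightarrow> real) (\<Sum>c\<in>C. p c) = (\<Sum>c\<in>C. map_poly of_int (p c))"
proof (induction C rule: infinite_finite_induct)
  case (insert x F)
  have "map_poly (of_int :: int \<Rightarrow> real) (p + q) = map_poly of_int p + map_poly of_int q" for p q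
    by (rule poly_eqI) (simp add: coeff_map_poly)
  thus ?case using insert by simp
qed simp_all

lemma poly_geom_poly:
  "poly (map_poly (of_int :: int \<Rightarrow> real) (geom_poly M \<mu>)) t = gen_coeff (mset_index M) fst t \<mu>"
  unfolding geom_poly_eq gen_coeff_def map_poly_of_int_sum poly_sum
  by (simp add: map_poly_monom poly_monom)

lemma poly_geom_poly_one: "real_of_int (poly (geom_poly M \<mu>) 1) = gen_coeff (mset_index M) fst 1 \<mu>"
  unfolding geom_poly_eq gen_coeff_def poly_sum by (simp add: poly_monom)

lemma partitions_nonempty_if_geom_poly: "geom_poly M \<mu> \<noteq> 0 \<Longrightarrow> partitions (mset_index M) fst \<mu> \<noteq> {}"
  unfolding geom_poly_eq by auto

lemma partitions_nonempty_if_gen_coeff: "gen_coeff I f t z \<noteq> 0 \<Longrightarrow> partitions I f z \<noteq> {}"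
  unfolding gen_coeff_def by auto

lemma pair_lincomb: "pair \<phi> (lincomb I c f) = (\<Sum>x\<in>I. int (c x) * pair \<phi> (f x))"
proof -
  have "lincomb I c f = (\<Sum>x\<in>I. smul (int (c x)) (f x))"
    unfolding lincomb_def by (simp add: fun_eq_iff sum_fun_apply)
  thus ?thesis by (simp add: pair_right.sum pair_smul_right)
qed

lemma pair_partition:
  "c \<in> partitions I f z \<Longrightarrow> pair \<phi> z = (\<Sum>x\<in>I. int (c x) * pair \<phi> (f x))"
  unfolding partitions_def by (auto simp: pair_lincomb)

lemma finite_partitions:
  assumes fin: "finite I" and pos: "\<forall>x\<in>I. pair \<phi> (f x) \<ge> 1"
  shows "finite (partitions I f z)"
proof -
  have "partitions I f z \<subseteq> I \<rightarrow>\<^sub>E {0..nat (pair \<phi> z)}"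
  proof
    fix c assume c: "c \<in> partitions I f z"
    have "(\<Sum>x\<in>I. int (c x)) \<le> (\<Sum>x\<in>I. int (c x) * pair \<phi> (f x))"
      by (rule sum_mono) (use pos in \<open>auto intro: mult_le_cancel_left1[THEN iffD2]\<close>)
    hence "int (\<Sum>x\<in>I. c x) \<le> pair \<phi> z" using pair_partition[OF c] by simp
    hence "c x \<le> nat (pair \<phi> z)" if "x \<in> I" for x
      using member_le_sum[OF that _ fin, of c] by linarith
    thus "c \<in> I \<rightarrow>\<^sub>E {0..nat (pair \<phi> z)}" using c unfolding partitions_def by (auto simp: PiE_iff)
  qed
  moreover have "finite (I \<rightarrow>\<^sub>E {0..nat (pair \<phi> z)})" using fin by (simp add: finite_PiE)
  ultimately show ?thesis by (rule finite_subset)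
qed

lemma gen_coeff_uminus: "gen_coeff I (\<lambda>x. - f x) t z = gen_coeff I f t (- z)"
proof -
  have "lincomb I c (\<lambda>x. - f x) = - lincomb I c f" for c
    unfolding lincomb_def by (simp add: fun_eq_iff sum_negf)
  hence "partitions I (\<lambda>x. - f x) z = partitions I f (- z)"
    unfolding partitions_def by (auto simp: minus_equation_iff)
  thus ?thesis unfolding gen_coeff_def by simp
qed

lemma partitions_reindex:
  assumes h: "bij_betw h J I"
  shows "bij_betw (\<lambda>c. restrict (c \<circ> h) J) (partitions I f z) (partitions J (f \<circ> h) z)"
proof (rule bij_betw_byWitness[where f' = "\<lambda>d. restrict (d \<circ> inv_into J h) I"])
  have inv_h: "inv_into J h (h y) = y" "h y \<in> I" if "y \<in> J" for y
    using that h bij_betw_inv_into_left bij_betwE by fastforce+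
  have h_inv: "h (inv_into J h x) = x" "inv_into J h x \<in> J" if "x \<in> I" for x
    using that h bij_betw_inv_into_right bij_betw_inv_into bij_betwE by fastforce+
  have lincomb_h: "lincomb J (restrict (c \<circ> h) J) (f \<circ> h) = lincomb I c f" for c
  proof
    fix k
    have "lincomb J (restrict (c \<circ> h) J) (f \<circ> h) k = (\<Sum>y\<in>J. int (c (h y)) * f (h y) k)"
      unfolding lincomb_def by simp
    also have "\<dots> = lincomb I c f k"
      unfolding lincomb_def by (rule sum.reindex_bij_betw[OF h])
    finally show "lincomb J (restrict (c \<circ> h) J) (f \<circ> h) k = lincomb I c f k" .
  qed
  have lincomb_inv: "lincomb I (restrict (d \<circ> inv_into J h) I) f = lincomb J d (f \<circ> h)" for d
    using lincomb_h[of "restrict (d \<circ> inv_into J h) I"] inv_h unfolding lincomb_def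
    by (simp add: fun_eq_iff)
  show "\<forall>c\<in>partitions I f z. restrict (restrict (c \<circ> h) J \<circ> inv_into J h) I = c"
    using h_inv by (auto simp: partitions_def PiE_iff extensional_def fun_eq_iff)
  show "\<forall>d\<in>partitions J (f \<circ> h) z. restrict (restrict (d \<circ> inv_into J h) I \<circ> h) J = d"
    using inv_h by (auto simp: partitions_def PiE_iff extensional_def fun_eq_iff)
  show "(\<lambda>c. restrict (c \<circ> h) J) ` partitions I f z \<subseteq> partitions J (f \<circ> h) z"
    using lincomb_h by (auto simp: partitions_def)
  show "(\<lambda>d. restrict (d \<circ> inv_into J h) I) ` partitions J (f \<circ> h) z \<subseteq> partitions I f z"
    using lincomb_inv by (auto simp: partitions_def)
qed

lemma gen_coeff_reindex:
  assumes h: "bij_betw h J I"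
  shows "gen_coeff I f t z = gen_coeff J (f \<circ> h) t z"
proof -
  have sums: "(\<Sum>y\<in>J. restrict (c \<circ> h) J y) = (\<Sum>x\<in>I. c x)" for c :: "_ \<Rightarrow> nat"
    using sum.reindex_bij_betw[OF h, of c] by simp
  have "gen_coeff J (f \<circ> h) t z = (\<Sum>c\<in>partitions I f z. t ^ (\<Sum>y\<in>J. restrict (c \<circ> h) J y))"
    unfolding gen_coeff_def by (rule sum.reindex_bij_betw[OF partitions_reindex[OF h], symmetric])
  thus ?thesis unfolding sums gen_coeff_def by simp
qed

definition merge_on :: "'i set \<Rightarrow> ('i \<Rightarrow> 'a) \<Rightarrow> ('i \<Rightarrow> 'a) \<Rightarrow> 'i \<Rightarrow> 'a" where
  "merge_on I c1 c2 x = (if x \<in> I then c1 x else c2 x)"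

context
  fixes I1 I2 :: "'i set" and f :: "'i \<Rightarrow> ('n \<Rightarrow> int)" and z :: "'n \<Rightarrow> int" and A
  assumes fin1: "finite I1" and fin2: "finite I2" and disj: "I1 \<inter> I2 = {}"
    and covers: "\<And>a. partitions I1 f a \<noteq> {} \<Longrightarrow> partitions I2 f (z - a) \<noteq> {} \<Longrightarrow> a \<in> A"
begin

lemma lincomb_union: "lincomb (I1 \<union> I2) c f = lincomb I1 c f + lincomb I2 c f"
  unfolding lincomb_def using fin1 fin2 disj by (simp add: fun_eq_iff sum.union_disjoint)

lemma lincomb_merge_on:
  "lincomb I1 (merge_on I1 c1 c2) f = lincomb I1 c1 f" "lincomb I2 (merge_on I1 c1 c2) f = lincomb I2 c2 f"
  unfolding lincomb_def merge_on_def using disj by (auto simp: fun_eq_iff intro!: sum.cong)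

lemma merge_on_partitions:
  "(\<lambda>(a, c1, c2). merge_on I1 c1 c2) ` Sigma A (\<lambda>a. partitions I1 f a \<times> partitions I2 f (z - a))
    = partitions (I1 \<union> I2) f z"
proof (intro equalityI subsetI)
  fix c assume "c \<in> (\<lambda>(a, c1, c2). merge_on I1 c1 c2) ` Sigma A (\<lambda>a. partitions I1 f a \<times> partitions I2 f (z - a))"
  then obtain a c1 c2 where "c1 \<in> partitions I1 f a" "c2 \<in> partitions I2 f (z - a)" "c = merge_on I1 c1 c2"
    by auto
  thus "c \<in> partitions (I1 \<union> I2) f z"
    by (auto simp: partitions_def lincomb_union lincomb_merge_on PiE_iff extensional_def merge_on_def)
next
  fix c assume c: "c \<in> partitions (I1 \<union> I2) f z"
  define a where "a = lincomb I1 (restrict c I1) f"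
  have c1: "restrict c I1 \<in> partitions I1 f a" unfolding partitions_def a_def by auto
  have restrict: "lincomb I (restrict c I) f = lincomb I c f" for I
    unfolding lincomb_def by (auto intro!: sum.cong)
  have "lincomb I1 c f + lincomb I2 c f = z" using c by (simp add: partitions_def lincomb_union)
  hence "lincomb I2 (restrict c I2) f = z - a" unfolding a_def restrict by (simp add: algebra_simps)
  hence c2: "restrict c I2 \<in> partitions I2 f (z - a)" unfolding partitions_def by auto
  have "merge_on I1 (restrict c I1) (restrict c I2) = c"
    using c disj by (auto simp: partitions_def merge_on_def PiE_iff extensional_def fun_eq_iff)
  thus "c \<in> (\<lambda>(a, c1, c2). merge_on I1 c1 c2) ` Sigma A (\<lambda>a. partitions I1 f a \<times> partitions I2 f (z - a))"
    using covers[of a] c1 c2 by (intro image_eqI[where x = "(a, restrict c I1, restrict c I2)"]) auto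
qed

lemma inj_on_merge_on_partitions:
  "inj_on (\<lambda>(a, c1, c2). merge_on I1 c1 c2) (Sigma A (\<lambda>a. partitions I1 f a \<times> partitions I2 f (z - a)))"
proof (rule inj_onI, clarsimp)
  fix a c1 c2 a' c1' c2'
  assume c: "c1 \<in> partitions I1 f a" "c2 \<in> partitions I2 f (z - a)"
    "c1' \<in> partitions I1 f a'" "c2' \<in> partitions I2 f (z - a')"
    and eq: "merge_on I1 c1 c2 = merge_on I1 c1' c2'"
  have "c1 x = c1' x" for x
  proof (cases "x \<in> I1")
    case True thus ?thesis using fun_cong[OF eq, of x] by (simp add: merge_on_def)
  next
    case False thus ?thesis using c(1,3) by (auto simp: partitions_def PiE_iff extensional_def)
  qed
  moreover have "c2 x = c2' x" for x
  proof (cases "x \<in> I2")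
    case True
    hence "x \<notin> I1" using disj by blast
    thus ?thesis using fun_cong[OF eq, of x] by (simp add: merge_on_def)
  next
    case False thus ?thesis using c(2,4) by (auto simp: partitions_def PiE_iff extensional_def)
  qed
  ultimately have "c1 = c1'" "c2 = c2'" by auto
  moreover have "a = a'" using c(1,3) \<open>c1 = c1'\<close> by (simp add: partitions_def)
  ultimately show "a = a' \<and> c1 = c1' \<and> c2 = c2'" by simp
qed

lemma gen_coeff_union:
  assumes finA: "finite A"
    and fin_part1: "\<And>a. finite (partitions I1 f a)" and fin_part2: "\<And>a. finite (partitions I2 f a)"
  shows "gen_coeff (I1 \<union> I2) f t z = (\<Sum>a\<in>A. gen_coeff I1 f t a * gen_coeff I2 f t (z - a))"
proof -
  let ?Sig = "Sigma A (\<lambda>a. partitions I1 f a \<times> partitions I2 f (z - a))"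
  have "(\<Sum>x\<in>I1 \<union> I2. merge_on I1 c1 c2 x) = (\<Sum>x\<in>I1. c1 x) + (\<Sum>x\<in>I2. c2 x)" for c1 c2 :: "_ \<Rightarrow> nat"
  proof -
    have "(\<Sum>x\<in>I2. merge_on I1 c1 c2 x) = (\<Sum>x\<in>I2. c2 x)"
      using disj by (intro sum.cong) (auto simp: merge_on_def)
    thus ?thesis using fin1 fin2 disj by (simp add: sum.union_disjoint merge_on_def)
  qed
  note sums = this
  have "gen_coeff (I1 \<union> I2) f t z
      = (\<Sum>p\<in>?Sig. t ^ (\<Sum>x\<in>I1 \<union> I2. (case p of (a, c1, c2) \<Rightarrow> merge_on I1 c1 c2) x))"
    unfolding gen_coeff_def merge_on_partitions[symmetric]
    by (rule sum.reindex[OF inj_on_merge_on_partitions, unfolded comp_def])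
  also have "\<dots> = (\<Sum>(a, c1, c2)\<in>?Sig. t ^ (\<Sum>x\<in>I1. c1 x) * t ^ (\<Sum>x\<in>I2. c2 x))"
    using sums by (intro sum.cong) (auto simp: power_add)
  also have "\<dots> = (\<Sum>a\<in>A. \<Sum>(c1, c2)\<in>partitions I1 f a \<times> partitions I2 f (z - a).
      t ^ (\<Sum>x\<in>I1. c1 x) * t ^ (\<Sum>x\<in>I2. c2 x))"
    using finA fin_part1 fin_part2 by (subst sum.Sigma) (auto simp: split_def)
  also have "\<dots> = (\<Sum>a\<in>A. gen_coeff I1 f t a * gen_coeff I2 f t (z - a))"
    unfolding gen_coeff_def sum_product by (simp add: sum.cartesian_product split_def)
  finally show ?thesis .
qed

end

lemma finite_mset_index: "finite (mset_index M)"
proof -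
  have "mset_index M \<subseteq> set_mset M \<times> {..<size M}"
    unfolding mset_index_def using count_le_size[of M] by (auto intro: count_inI order.strict_trans2)
  thus ?thesis by (rule finite_subset) auto
qed

lemma mset_index_fst: "x \<in> mset_index M \<Longrightarrow> fst x \<in># M"
  unfolding mset_index_def by (auto intro: count_inI)

lemma mset_index_plus:
  "mset_index (M1 + M2) = mset_index M1 \<union> (\<lambda>(v, j). (v, j + count M1 v)) ` mset_index M2"
proof (intro equalityI subsetI)
  fix x assume "x \<in> mset_index (M1 + M2)"
  then obtain v j where x: "x = (v, j)" "j < count M1 v + count M2 v" unfolding mset_index_def by auto
  show "x \<in> mset_index M1 \<union> (\<lambda>(v, j). (v, j + count M1 v)) ` mset_index M2"
  proof (cases "j < count M1 v")
    case False
    hence "(v, j - count M1 v) \<in> mset_index M2" "x = (\<lambda>(v, j). (v, j + count M1 v)) (v, j - count M1 v)"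
      using x unfolding mset_index_def by auto
    thus ?thesis by blast
  qed (use x in \<open>simp add: mset_index_def\<close>)
qed (auto simp: mset_index_def)

lemma gen_coeff_mset_plus:
  fixes M1 M2 :: "('n \<Rightarrow> int) multiset"
  assumes "finite A"
    and "\<And>a. partitions (mset_index M1) fst a \<noteq> {} \<Longrightarrow> partitions (mset_index M2) fst (z - a) \<noteq> {} \<Longrightarrow> a \<in> A"
    and "\<And>a. finite (partitions (mset_index M1) fst a)" and "\<And>a. finite (partitions (mset_index M2) fst a)"
  shows "gen_coeff (mset_index (M1 + M2)) fst t z
    = (\<Sum>a\<in>A. gen_coeff (mset_index M1) fst t a * gen_coeff (mset_index M2) fst t (z - a))"
proof -
  define sh where "sh = (\<lambda>(v::'n \<Rightarrow> int, j). (v, j + count M1 v))"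
  have bij: "bij_betw sh (mset_index M2) (sh ` mset_index M2)"
    unfolding sh_def by (rule inj_on_imp_bij_betw) (auto simp: inj_on_def)
  have fst_sh: "fst \<circ> sh = fst" unfolding sh_def by auto
  have P: "bij_betw (\<lambda>c. restrict (c \<circ> sh) (mset_index M2))
      (partitions (sh ` mset_index M2) fst b) (partitions (mset_index M2) fst b)" for b
    using partitions_reindex[OF bij, of fst b] unfolding fst_sh .
  have shifted: "gen_coeff (sh ` mset_index M2) fst t b = gen_coeff (mset_index M2) fst t b"
    "partitions (sh ` mset_index M2) fst b = {} \<longleftrightarrow> partitions (mset_index M2) fst b = {}"
    "finite (partitions (sh ` mset_index M2) fst b) \<longleftrightarrow> finite (partitions (mset_index M2) fst b)" for b t
  proof -
    show "gen_coeff (sh ` mset_index M2) fst t b = gen_coeff (mset_index M2) fst t b"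
      using gen_coeff_reindex[OF bij, of fst t b] unfolding fst_sh .
    show "partitions (sh ` mset_index M2) fst b = {} \<longleftrightarrow> partitions (mset_index M2) fst b = {}"
      using bij_betw_imp_surj_on[OF P] by auto
    show "finite (partitions (sh ` mset_index M2) fst b) \<longleftrightarrow> finite (partitions (mset_index M2) fst b)"
      by (rule bij_betw_finite[OF P])
  qed
  have "gen_coeff (mset_index M1 \<union> sh ` mset_index M2) fst t z
      = (\<Sum>a\<in>A. gen_coeff (mset_index M1) fst t a * gen_coeff (sh ` mset_index M2) fst t (z - a))"
  proof (rule gen_coeff_union)
    show "finite (mset_index M1)" "finite (sh ` mset_index M2)" using finite_mset_index by auto
    show "mset_index M1 \<inter> sh ` mset_index M2 = {}" unfolding sh_def mset_index_def by auto
    show "\<And>a. partitions (mset_index M1) fst a \<noteq> {} \<Longrightarrow>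
        partitions (sh ` mset_index M2) fst (z - a) \<noteq> {} \<Longrightarrow> a \<in> A"
      using assms(2) shifted(2) by blast
    show "finite (partitions (sh ` mset_index M2) fst a)" for a using assms(4) shifted(3) by blast
  qed (use assms in auto)
  thus ?thesis unfolding mset_index_plus sh_def[symmetric] shifted .
qed

lemma gen_coeff_image_uminus:
  fixes M :: "('n \<Rightarrow> int) multiset"
  shows "gen_coeff (mset_index (image_mset uminus M)) fst t (- y) = gen_coeff (mset_index M) fst t y"
proof -
  define h where "h = (\<lambda>(v::'n \<Rightarrow> int, j::nat). (- v, j))"
  have "count (image_mset uminus M) (- v) = count M v" for v
  proof -
    have "uminus -` {- v} \<inter> set_mset M = (if v \<in># M then {v} else {})" by auto
    thus ?thesis by (auto simp: count_image_mset not_in_iff)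
  qed
  hence count_uminus: "count (image_mset uminus M) v = count M (- v)" for v
    by (metis minus_minus)
  have bij: "bij_betw h (mset_index M) (mset_index (image_mset uminus M))"
    by (rule bij_betw_byWitness[where f' = h]) (auto simp: h_def mset_index_def count_uminus)
  have fst_h: "fst \<circ> h = (\<lambda>x. - fst x)" unfolding h_def by auto
  have "gen_coeff (mset_index (image_mset uminus M)) fst t (- y) = gen_coeff (mset_index M) (\<lambda>x. - fst x) t (- y)"
    using gen_coeff_reindex[OF bij, of fst t "- y"] unfolding fst_h .
  also have "\<dots> = gen_coeff (mset_index M) fst t y" by (simp add: gen_coeff_uminus)
  finally show ?thesis .
qed

lemma fconv_eq:
  assumes "finite A" "{a. f a \<noteq> 0 \<and> g (\<mu> - a) \<noteq> 0} \<subseteq> A"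
  shows "fconv f g \<mu> = (\<Sum>a\<in>A. f a * g (\<mu> - a))"
proof -
  have diff: "(\<lambda>i. \<mu> i - a i) = \<mu> - a" for a by (simp add: fun_eq_iff)
  show ?thesis unfolding fconv_def diff by (rule sum.mono_neutral_left) (use assms in auto)
qed

context positive_root_datum
begin

abbreviation "Phi_pos_mset \<equiv> mset_set Phi_pos"

lemma mset_index_pos_coroots: "x \<in> mset_index Phi_pos_mset \<Longrightarrow> fst x \<in> Phi_pos"
  using mset_index_fst finite_pos_coroots by fastforce

lemma finite_partitions_pos_coroots: "finite (partitions (mset_index Phi_pos_mset) fst z)"
  by (rule finite_partitions[OF finite_mset_index, of _ root_sum])
    (use mset_index_pos_coroots pair_root_sum_pos_coroot in \<open>auto simp: int_one_le_iff_zero_less\<close>)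

lemma denominator_coeff:
  "(\<Sum>S\<in>{S. S \<subseteq> Phi_pos \<and> (\<lambda>i. \<Sum>\<gamma>\<in>S. \<gamma> i) = m}. (-1::real) ^ card S)
   = (\<Sum>w\<in>W. (-1) ^ wlength Rp cor w * (if rhodiff Rp cor w = m then 1 else 0))"
proof -
  have "(\<lambda>i. \<Sum>\<gamma>\<in>S. \<gamma> i) = (\<Sum>\<gamma>\<in>S. \<gamma>)" for S :: "('n \<Rightarrow> int) set"
    by (simp add: fun_eq_iff sum_fun_apply)
  hence "(\<Sum>S\<in>{S. S \<subseteq> Phi_pos \<and> (\<lambda>i. \<Sum>\<gamma>\<in>S. \<gamma> i) = m}. (-1::real) ^ card S)
      = real_of_int (\<Sum>S\<in>{S. S \<subseteq> Phi_pos \<and> (\<Sum>\<gamma>\<in>S. \<gamma>) = m}. (-1) ^ card S)"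
    by simp
  also have "\<dots> = real_of_int (\<Sum>w\<in>W. (-1) ^ wlength Rp cor w * (if rhodiff Rp cor w = m then 1 else 0))"
    by (simp only: weyl_denominator_formula)
  also have "\<dots> = (\<Sum>w\<in>W. (-1) ^ wlength Rp cor w * (if rhodiff Rp cor w = m then 1 else 0))"
    by (auto intro!: sum.cong)
  finally show ?thesis .
qed

theorem denominator_convolution:
  "fconv (\<lambda>m. \<Sum>S\<in>{S. S \<subseteq> Phi_pos \<and> (\<lambda>i. \<Sum>\<gamma>\<in>S. \<gamma> i) = m}. (-1::real) ^ card S) G x
   = (\<Sum>w\<in>W. (-1) ^ wlength Rp cor w * G (x - rhodiff Rp cor w))"
proof -
  define D where "D = (\<lambda>m. \<Sum>S\<in>{S. S \<subseteq> Phi_pos \<and> (\<lambda>i. \<Sum>\<gamma>\<in>S. \<gamma> i) = m}. (-1::real) ^ card S)"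
  define A where "A = (\<lambda>S. \<Sum>\<gamma>\<in>S. \<gamma>) ` Pow Phi_pos"
  have fin: "finite A" unfolding A_def using finite_pos_coroots by simp
  have rhodiff_in_A: "rhodiff Rp cor w \<in> A" if "w \<in> W" for w
    using weyl_two_rho(2)[OF that] inversion_set_subset unfolding A_def by blast
  have D: "D m = (\<Sum>w\<in>W. (-1) ^ wlength Rp cor w * (if rhodiff Rp cor w = m then 1 else 0))" for m
    unfolding D_def by (rule denominator_coeff)
  have "{a. D a \<noteq> 0 \<and> G (x - a) \<noteq> 0} \<subseteq> A"
  proof
    fix m assume "m \<in> {a. D a \<noteq> 0 \<and> G (x - a) \<noteq> 0}"
    hence "D m \<noteq> 0" by simp
    have "\<exists>w\<in>W. rhodiff Rp cor w = m"
    proof (rule ccontr)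
      assume "\<not> ?thesis"
      hence "D m = 0" unfolding D by (intro sum.neutral) auto
      thus False using \<open>D m \<noteq> 0\<close> by contradiction
    qed
    thus "m \<in> A" using rhodiff_in_A by blast
  qed
  hence "fconv D G x = (\<Sum>m\<in>A. D m * G (x - m))" by (rule fconv_eq[OF fin])
  also have "\<dots> = (\<Sum>m\<in>A. \<Sum>w\<in>W. (-1) ^ wlength Rp cor w * (if rhodiff Rp cor w = m then G (x - m) else 0))"
    unfolding D sum_distrib_right by (intro sum.cong refl) simp
  also have "\<dots> = (\<Sum>w\<in>W. \<Sum>m\<in>A. (-1) ^ wlength Rp cor w * (if rhodiff Rp cor w = m then G (x - m) else 0))"
    by (rule sum.swap)
  also have "\<dots> = (\<Sum>w\<in>W. (-1) ^ wlength Rp cor w * G (x - rhodiff Rp cor w))"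
    using rhodiff_in_A by (intro sum.cong refl) (simp flip: sum_distrib_left add: sum.delta'[OF fin])
  finally show ?thesis unfolding D_def .
qed

end

definition bounded_sums :: "('n \<Rightarrow> int) multiset \<Rightarrow> int \<Rightarrow> ('n \<Rightarrow> int) set" where
  "bounded_sums M k = (\<lambda>c. lincomb (mset_index M) c fst) ` (mset_index M \<rightarrow>\<^sub>E {0..nat k})"

lemma finite_bounded_sums: "finite (bounded_sums M k)"
  unfolding bounded_sums_def by (intro finite_imageI finite_PiE finite_mset_index) auto

locale Psi_datum = positive_root_datum R cor Rp xi
  for R :: "('n::finite \<Rightarrow> int) set" and cor Rp xi +
  fixes det rho :: "'n \<Rightarrow> int" and q :: real
  assumes det_coroots: "\<forall>a\<in>R. pair det (cor a) = 0"
    and det_rho: "pair det rho = 1"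
    and q_nonzero: "q \<noteq> 0"
begin

abbreviation "V \<equiv> weights_V R cor Rp rho"

lemma pair_det_weyl: "w \<in> W \<Longrightarrow> pair det (w l) = pair det l"
proof (induction arbitrary: l rule: weyl_group.induct)
  case (weyl_step w a)
  have "pair det ((corefl cor a \<circ> w) l) = pair det (w l) - pair a (w l) * pair det (cor a)"
    unfolding comp_apply corefl_eq pair_right.diff pair_smul_right ..
  thus ?case using det_coroots weyl_step by simp
qed simp

lemma pair_det_pos_coroot: "\<gamma> \<in> Phi_pos \<Longrightarrow> pair det \<gamma> = 0"
  using det_coroots pos_root_root by blast

lemma pair_det_rhodiff: "w \<in> W \<Longrightarrow> pair det (rhodiff Rp cor w) = 0"
  unfolding weyl_two_rho(2) pair_right.sum
  using inversion_set_subset pair_det_pos_coroot by (simp add: subset_iff)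

lemma pair_det_partition: "partitions (mset_index Phi_pos_mset) fst z \<noteq> {} \<Longrightarrow> pair det z = 0"
proof -
  assume "partitions (mset_index Phi_pos_mset) fst z \<noteq> {}"
  then obtain c where c: "c \<in> partitions (mset_index Phi_pos_mset) fst z" by blast
  have "pair det (fst x) = 0" if "x \<in> mset_index Phi_pos_mset" for x
    using mset_index_pos_coroots[OF that] by (rule pair_det_pos_coroot)
  thus ?thesis using pair_partition[OF c] by simp
qed

lemma weight_mult_nonzero: "v \<in># V \<Longrightarrow> weight_mult R cor Rp rho v \<noteq> 0"
proof -
  assume v: "v \<in># V"
  define S where "S = {\<mu>. weight_mult R cor Rp rho \<mu> \<noteq> 0}"
  have fin: "finite S"
  proof (rule ccontr)
    assume "infinite S"
    hence "V = {#}" unfolding weights_V_def S_def[symmetric] by simp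
    thus False using v by simp
  qed
  have "v \<in> set_mset (\<Sum>\<mu>\<in>S. replicate_mset (nat (weight_mult R cor Rp rho \<mu>)) \<mu>)"
    using v unfolding weights_V_def S_def by simp
  also have "\<dots> = (\<Union>\<mu>\<in>S. set_mset (replicate_mset (nat (weight_mult R cor Rp rho \<mu>)) \<mu>))"
    by (rule set_mset_sum[OF fin])
  finally obtain \<mu> where "\<mu> \<in> S" "v \<in># replicate_mset (nat (weight_mult R cor Rp rho \<mu>)) \<mu>"
    by blast
  thus ?thesis unfolding S_def by (simp split: if_splits)
qed

lemma pair_det_weight:
  assumes v: "v \<in># V" shows "pair det v = 1"
proof -
  have "\<exists>w\<in>W. poly (geom_poly Phi_pos_mset (\<lambda>i. v i - w rho i - rhodiff Rp cor w i)) 1 \<noteq> 0"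
  proof (rule ccontr)
    assume "\<not> ?thesis"
    hence "weight_mult R cor Rp rho v = 0" unfolding weight_mult_def by (intro sum.neutral) simp
    thus False using weight_mult_nonzero[OF v] by contradiction
  qed
  then obtain w where w: "w \<in> W" "poly (geom_poly Phi_pos_mset (\<lambda>i. v i - w rho i - rhodiff Rp cor w i)) 1 \<noteq> 0"
    by blast
  have "(\<lambda>i. v i - w rho i - rhodiff Rp cor w i) = v - w rho - rhodiff Rp cor w" by (simp add: fun_eq_iff)
  hence "geom_poly Phi_pos_mset (v - w rho - rhodiff Rp cor w) \<noteq> 0" using w(2) by (metis poly_0)
  hence "pair det (v - w rho - rhodiff Rp cor w) = 0"
    by (intro pair_det_partition partitions_nonempty_if_geom_poly)
  thus ?thesis using pair_det_weyl[OF w(1)] pair_det_rhodiff[OF w(1)] det_rho by (simp add: pair_right.diff)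
qed


lemma mset_index_weights: "x \<in> mset_index V \<Longrightarrow> pair det (fst x) = 1"
  using mset_index_fst pair_det_weight by blast

lemma finite_partitions_weights: "finite (partitions (mset_index V) fst a)"
  by (rule finite_partitions[OF finite_mset_index, of _ det]) (simp add: mset_index_weights)

lemma pair_det_partition_weights:
  "c \<in> partitions (mset_index V) fst a \<Longrightarrow> pair det a = int (\<Sum>x\<in>mset_index V. c x)"
  using pair_partition[of c "mset_index V" fst a det] mset_index_weights by simp

lemma bounded_sums_cover:
  assumes "partitions (mset_index V) fst a \<noteq> {}" and "partitions (mset_index Phi_pos_mset) fst (z - a) \<noteq> {}"
  shows "a \<in> bounded_sums V (pair det z)"
proof -
  obtain c where c: "c \<in> partitions (mset_index V) fst a" using assms(1) by blast
  have "pair det (z - a) = 0" by (rule pair_det_partition[OF assms(2)])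
  hence "nat (pair det z) = (\<Sum>x\<in>mset_index V. c x)"
    using pair_det_partition_weights[OF c] by (simp add: pair_right.diff del: of_nat_sum)
  hence "c x \<le> nat (pair det z)" if "x \<in> mset_index V" for x
    using member_le_sum[OF that _ finite_mset_index, of c] by simp
  hence "c \<in> mset_index V \<rightarrow>\<^sub>E {0..nat (pair det z)}" using c unfolding partitions_def by (auto simp: PiE_iff)
  moreover have "a = lincomb (mset_index V) c fst" using c unfolding partitions_def by simp
  ultimately show ?thesis unfolding bounded_sums_def by blast
qed

text \<open>Every weight of \<open>V\<close> has \<open>det\<close>-degree one, so along \<open>V\<close> the variable \<open>t\<close> only records the
  \<open>det\<close>-degree.\<close>
lemma gen_coeff_weights: "gen_coeff (mset_index V) fst t a = t ^ nat (pair det a) * gen_coeff (mset_index V) fst 1 a"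
proof -
  have "gen_coeff (mset_index V) fst t a = (\<Sum>c\<in>partitions (mset_index V) fst a. t ^ nat (pair det a))"
    unfolding gen_coeff_def using pair_det_partition_weights by (intro sum.cong) (auto simp del: of_nat_sum)
  thus ?thesis unfolding gen_coeff_def by simp
qed

definition weight_convolution :: "real \<Rightarrow> ('n \<Rightarrow> int) \<Rightarrow> real" where
  "weight_convolution t y = (\<Sum>a\<in>bounded_sums V (pair det y).
     gen_coeff (mset_index V) fst 1 a * gen_coeff (mset_index Phi_pos_mset) fst t (y - a))"

lemma gen_coeff_Psi:
  "gen_coeff (mset_index (image_mset uminus (Psi R cor Rp rho))) fst t (- y) = t ^ nat (pair det y) * weight_convolution t y"
proof -
  let ?A = "bounded_sums V (pair det y)"
  have "gen_coeff (mset_index (image_mset uminus (Psi R cor Rp rho))) fst t (- y)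
      = gen_coeff (mset_index (V + Phi_pos_mset)) fst t y"
    using gen_coeff_image_uminus[of "Phi_pos_mset + V" t y] by (simp add: Psi_def add.commute)
  also have "\<dots> = (\<Sum>a\<in>?A. gen_coeff (mset_index V) fst t a * gen_coeff (mset_index Phi_pos_mset) fst t (y - a))"
    by (rule gen_coeff_mset_plus)
      (use finite_bounded_sums bounded_sums_cover finite_partitions_weights finite_partitions_pos_coroots in auto)
  also have "\<dots> = (\<Sum>a\<in>?A. t ^ nat (pair det y) * (gen_coeff (mset_index V) fst 1 a * gen_coeff (mset_index Phi_pos_mset) fst t (y - a)))"
  proof (rule sum.cong)
    fix a
    show "gen_coeff (mset_index V) fst t a * gen_coeff (mset_index Phi_pos_mset) fst t (y - a)
      = t ^ nat (pair det y) * (gen_coeff (mset_index V) fst 1 a * gen_coeff (mset_index Phi_pos_mset) fst t (y - a))"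
    proof (cases "gen_coeff (mset_index Phi_pos_mset) fst t (y - a) = 0")
      case False
      hence "pair det (y - a) = 0" by (intro pair_det_partition partitions_nonempty_if_gen_coeff)
      hence "pair det a = pair det y" by (simp add: pair_right.diff)
      thus ?thesis using gen_coeff_weights[of t a] by simp
    qed simp
  qed simp
  finally show ?thesis unfolding weight_convolution_def by (simp add: sum_distrib_left)
qed

lemma weight_convolution_neg_degree: "pair det y < 0 \<Longrightarrow> weight_convolution t y = 0"
  unfolding weight_convolution_def
proof (rule sum.neutral, rule ballI, rule ccontr)
  fix a assume neg: "pair det y < 0"
    and "gen_coeff (mset_index V) fst 1 a * gen_coeff (mset_index Phi_pos_mset) fst t (y - a) \<noteq> 0"
  hence "partitions (mset_index V) fst a \<noteq> {}" "partitions (mset_index Phi_pos_mset) fst (y - a) \<noteq> {}"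
    using partitions_nonempty_if_gen_coeff by auto
  then obtain c where c: "c \<in> partitions (mset_index V) fst a"
    and "pair det (y - a) = 0" using pair_det_partition by blast
  hence "pair det y = int (\<Sum>x\<in>mset_index V. c x)"
    using pair_det_partition_weights[OF c] by (simp add: pair_right.diff)
  thus False using neg by (simp del: of_nat_sum)
qed

lemma Psi_coeff:
  "(if 0 \<le> pair det y then gen_coeff (mset_index (image_mset uminus (Psi R cor Rp rho))) fst (1/q) (- y) * q powi pair det y else 0)
   = weight_convolution (1/q) y"
proof (cases "0 \<le> pair det y")
  case True
  hence "q powi pair det y = q ^ nat (pair det y)" by (metis int_nat_eq power_int_of_nat)
  hence "(1/q) ^ nat (pair det y) * q powi pair det y = 1" using q_nonzero by (simp add: power_one_over)
  thus ?thesis using True gen_coeff_Psi[of "1/q" y] by simp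
qed (simp add: weight_convolution_neg_degree)


lemma pair_det_shift: "w \<in> W \<Longrightarrow> pair det (\<mu> - rhodiff Rp cor w) = pair det \<mu>"
  using pair_det_rhodiff by (simp add: pair_right.diff)

lemma c_coeff_eq:
  "c_coeff R cor Rp rho det q \<mu> = (\<Sum>w\<in>W. (-1) ^ wlength Rp cor w *
     (gen_coeff (mset_index (image_mset uminus (Psi R cor Rp rho))) fst (1/q) (- (\<mu> - rhodiff Rp cor w))
       * q powi pair det \<mu>))"
proof -
  have "(\<lambda>v i. - v i) = (uminus :: ('n \<Rightarrow> int) \<Rightarrow> _)" "(\<lambda>i. rhodiff Rp cor w i - \<mu> i) = - (\<mu> - rhodiff Rp cor w)"
    for w by (simp_all add: fun_eq_iff)
  thus ?thesis unfolding c_coeff_def P_Psi_def Psi_def poly_geom_poly by (simp add: mult.assoc)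
qed

lemma rhs_coeff_eq:
  "rhs_coeff R cor Rp rho q \<mu> = (\<Sum>w\<in>W. (-1) ^ wlength Rp cor w * weight_convolution (1/q) (\<mu> - rhodiff Rp cor w))"
proof -
  let ?L = "gen_coeff (mset_index V) fst 1" and ?G = "gen_coeff (mset_index Phi_pos_mset) fst (1/q)"
  let ?H = "\<lambda>x. \<Sum>w\<in>W. (-1) ^ wlength Rp cor w * ?G (x - rhodiff Rp cor w)"
  let ?A = "bounded_sums V (pair det \<mu>)"
  have "rhs_coeff R cor Rp rho q \<mu> = fconv ?L ?H \<mu>"
    unfolding rhs_coeff_def denominator_convolution poly_geom_poly poly_geom_poly_one ..
  also have "\<dots> = (\<Sum>a\<in>?A. ?L a * ?H (\<mu> - a))"
  proof (rule fconv_eq[OF finite_bounded_sums], rule subsetI)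
    fix a assume "a \<in> {a. ?L a \<noteq> 0 \<and> ?H (\<mu> - a) \<noteq> 0}"
    hence L: "?L a \<noteq> 0" and H: "?H (\<mu> - a) \<noteq> 0" by auto
    obtain w where w: "w \<in> W" "?G (\<mu> - a - rhodiff Rp cor w) \<noteq> 0"
      using H sum.neutral[of W] by (metis (no_types, lifting) mult_zero_right)
    have eq: "\<mu> - a - rhodiff Rp cor w = (\<mu> - rhodiff Rp cor w) - a" by (simp add: algebra_simps)
    have "partitions (mset_index Phi_pos_mset) fst ((\<mu> - rhodiff Rp cor w) - a) \<noteq> {}"
      using partitions_nonempty_if_gen_coeff[OF w(2)] unfolding eq .
    with partitions_nonempty_if_gen_coeff[OF L]
    have "a \<in> bounded_sums V (pair det (\<mu> - rhodiff Rp cor w))" by (rule bounded_sums_cover)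
    thus "a \<in> ?A" using pair_det_shift[OF w(1)] by simp
  qed
  also have "\<dots> = (\<Sum>w\<in>W. (-1) ^ wlength Rp cor w * (\<Sum>a\<in>?A. ?L a * ?G (\<mu> - rhodiff Rp cor w - a)))"
    unfolding sum_distrib_left sum_distrib_right
    by (subst sum.swap) (simp add: algebra_simps)
  also have "\<dots> = (\<Sum>w\<in>W. (-1) ^ wlength Rp cor w * weight_convolution (1/q) (\<mu> - rhodiff Rp cor w))"
    unfolding weight_convolution_def using pair_det_shift by simp
  finally show ?thesis .
qed

theorem coeff_identity:
  "(if 0 \<le> pair det \<mu> then c_coeff R cor Rp rho det q \<mu> else 0) = rhs_coeff R cor Rp rho q \<mu>"
proof -
  have "(if 0 \<le> pair det \<mu> then c_coeff R cor Rp rho det q \<mu> else 0)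
    = (\<Sum>w\<in>W. (-1) ^ wlength Rp cor w * (if 0 \<le> pair det (\<mu> - rhodiff Rp cor w)
        then gen_coeff (mset_index (image_mset uminus (Psi R cor Rp rho))) fst (1/q) (- (\<mu> - rhodiff Rp cor w))
          * q powi pair det (\<mu> - rhodiff Rp cor w) else 0))"
    unfolding c_coeff_eq using pair_det_shift by (cases "0 \<le> pair det \<mu>") simp_all
  thus ?thesis unfolding Psi_coeff rhs_coeff_eq .
qed

end

text \<open>Only \<open>det\<close> vanishing on the coroots, \<open>\<langle>det, \<rho>\<rangle> = 1\<close> and \<open>q \<noteq> 0\<close> enter the proof.\<close>
theorem mainTheorem11:
  fixes R :: "('n::finite \<Rightarrow> int) set"
    and cor :: "('n \<Rightarrow> int) \<Rightarrow> ('n \<Rightarrow> int)"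
    and Rp :: "('n \<Rightarrow> int) set"
    and rho det :: "'n \<Rightarrow> int"
    and q :: real
  assumes "root_datum R cor"
    and "positive_system R Rp"
    and "\<forall>a\<in>Rp. pair a rho \<le> 0"
    and "\<not> (\<exists>c :: ('n \<Rightarrow> int) \<Rightarrow> real. \<forall>i. real_of_int (rho i) = (\<Sum>g\<in>cor ` R. c g * real_of_int (g i)))"
    and "\<forall>a\<in>R. pair det (cor a) = 0"
    and "pair det rho = 1"
    and "\<forall>x. (\<forall>a\<in>R. pair x (cor a) = 0) \<longrightarrow> (\<exists>k::int. x = (\<lambda>i. k * det i))"
    and "q > 1"
  shows "\<forall>mu. (if pair det mu \<ge> 0 then c_coeff R cor Rp rho det q mu else 0)
               = rhs_coeff R cor Rp rho q mu"
proof -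
  obtain xi where "\<forall>a\<in>R. real_pair xi a \<noteq> 0" "Rp = {a\<in>R. real_pair xi a > 0}"
    using assms(2) unfolding positive_system_def real_pair_def by blast
  then interpret Psi_datum R cor Rp xi det rho q
    using assms(1,5,6,8) by unfold_locales auto
  show ?thesis using coeff_identity by blast
qed

end
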